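(* Let $N\ge2$, $s\in(1/2,1)$, $q_1>1$, $q_2>1$, and let $V\colon(0,+\infty)\to[0,+\infty)$ and $K\colon(0,+\infty)\to(0,+\infty)$ be continuous. If $\mathcal S_0(q_1,R_1)<+\infty$ and $\mathcal S_\infty(q_2,R_2)<+\infty$ for some $R_1,R_2>0$, then $H^s_{V,\mathrm{rad}}(\mathbb{R}^N)$ is continuously embedded into $L^{q_1}_K(\mathbb{R}^N)+L^{q_2}_K(\mathbb{R}^N)$.
   Context: $B_R$ is the open ball of radius $R$ centered at the origin, $B_R^c$ its complement. For $0<s<1$, $2^*_s=\frac{2N}{N-2s}$, $C(N,s)=\left(\int_{\mathbb{R}^N}\frac{1-\cos\zeta_1}{|\zeta|^{N+2s}}d\zeta\right)^{-1}$, $[u]_{H^s}=\left(\frac{C(N,s)}{2}\iint_{\mathbb{R}^N\times\mathbb{R}^N}\frac{|u(x)-u(y)|^2}{|x-y|^{N+2s}}dx\,dy\right)^{1/2}$, $\dot H^s(\mathbb{R}^N)=\{u\in L^{2^*_s}(\mathbb{R}^N):[u]_{H^s}<\infty\}$, $H^s_V(\mathbb{R}^N)=\{u\in\dot H^s(\mathbb{R}^N):\int V(|x|)|u|^2dx<\infty\}$ with norm $\|u\|^2=[u]_{H^s}^2+\int_{\mathbb{R}^N}V(|x|)|u|^2dx$, and $H^s_{V,\mathrm{rad}}(\mathbb{R}^N)$ is the subspace of radial functions. $L^q_K(\mathbb{R}^N)=L^q(\mathbb{R}^N,K(|x|)dx)$ with norm $\|u\|_{L^q_K}=(\int K(|x|)|u|^qdx)^{1/q}$,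 and $L^{q_1}_K+L^{q_2}_K=\{u_1+u_2:u_i\in L^{q_i}_K\}$ with norm $\|u\|=\inf_{u=u_1+u_2}\max\{\|u_1\|_{L^{q_1}_K},\|u_2\|_{L^{q_2}_K}\}$. For $q>1$, $R>0$: $\mathcal S_0(q,R)=\sup\{\int_{B_R}K(|x|)|u|^qdx: u\in H^s_{V,\mathrm{rad}},\|u\|=1\}$ and $\mathcal S_\infty(q,R)=\sup\{\int_{B_R^c}K(|x|)|u|^qdx: u\in H^s_{V,\mathrm{rad}},\|u\|=1\}$. *)

theory Defs
  imports "HOL-Analysis.Analysis"
begin

text \<open>Ambient space R^N is an abstract Euclidean space 'a with N = DIM('a).
  Functions are real valued, given by (Borel measurable) representatives.\<close>

definition first_coord :: "'a::euclidean_space" where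
  "first_coord = (SOME b. b \<in> Basis)"

definition crit_exp :: "nat \<Rightarrow> real \<Rightarrow> real" where
  "crit_exp N s = 2 * real N / (real N - 2 * s)"

definition CNs :: "'a::euclidean_space itself \<Rightarrow> real \<Rightarrow> real" where
  "CNs TYPE('a) s = 1 / enn2real (\<integral>\<^sup>+ z. ennreal ((1 - cos (z \<bullet> (first_coord::'a)))
        / norm z powr (real DIM('a) + 2 * s)) \<partial>lborel)"

definition gagliardo_sq :: "real \<Rightarrow> ('a::euclidean_space \<Rightarrow> real) \<Rightarrow> ennreal" where
  "gagliardo_sq s u = ennreal (CNs TYPE('a) s / 2) *
     (\<integral>\<^sup>+ p. ennreal ((u (fst p) - u (snd p))\<^sup>2 / norm (fst p - snd p) powr (real DIM('a) + 2 * s))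
        \<partial>(lborel \<Otimes>\<^sub>M lborel))"

definition potential_int :: "(real \<Rightarrow> real) \<Rightarrow> ('a::euclidean_space \<Rightarrow> real) \<Rightarrow> ennreal" where
  "potential_int V u = (\<integral>\<^sup>+ x. ennreal (V (norm x) * (u x)\<^sup>2) \<partial>lborel)"

definition Hdot :: "real \<Rightarrow> ('a::euclidean_space \<Rightarrow> real) set" where
  "Hdot s = {u. u \<in> borel_measurable lborel
      \<and> (\<integral>\<^sup>+ x. ennreal (\<bar>u x\<bar> powr crit_exp DIM('a) s) \<partial>lborel) < \<infinity>
      \<and> gagliardo_sq s u < \<infinity>}"

definition HsV :: "real \<Rightarrow> (real \<Rightarrow> real) \<Rightarrow> ('a::euclidean_space \<Rightarrow> real) set" where
  "HsV s V = {u \<in> Hdot s. potential_int V u < \<infinity>}"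

definition radial :: "('a::real_normed_vector \<Rightarrow> real) \<Rightarrow> bool" where
  "radial u \<longleftrightarrow> (\<forall>x y. norm x = norm y \<longrightarrow> u x = u y)"

definition HsV_rad :: "real \<Rightarrow> (real \<Rightarrow> real) \<Rightarrow> ('a::euclidean_space \<Rightarrow> real) set" where
  "HsV_rad s V = {u \<in> HsV s V. radial u}"

definition HsV_norm :: "real \<Rightarrow> (real \<Rightarrow> real) \<Rightarrow> ('a::euclidean_space \<Rightarrow> real) \<Rightarrow> real" where
  "HsV_norm s V u = sqrt (enn2real (gagliardo_sq s u) + enn2real (potential_int V u))"

definition wint :: "(real \<Rightarrow> real) \<Rightarrow> real \<Rightarrow> 'a::euclidean_space set \<Rightarrow> ('a \<Rightarrow> real) \<Rightarrow> ennreal" where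
  "wint K q A u = (\<integral>\<^sup>+ x. ennreal (K (norm x) * \<bar>u x\<bar> powr q) * indicator A x \<partial>lborel)"

definition S0 :: "real \<Rightarrow> (real \<Rightarrow> real) \<Rightarrow> (real \<Rightarrow> real) \<Rightarrow> 'a::euclidean_space itself \<Rightarrow> real \<Rightarrow> real \<Rightarrow> ennreal" where
  "S0 s V K TYPE('a) q R = (SUP u \<in> {u \<in> (HsV_rad s V :: ('a \<Rightarrow> real) set). HsV_norm s V u = 1}.
      wint K q (ball 0 R) u)"

definition Sinf :: "real \<Rightarrow> (real \<Rightarrow> real) \<Rightarrow> (real \<Rightarrow> real) \<Rightarrow> 'a::euclidean_space itself \<Rightarrow> real \<Rightarrow> real \<Rightarrow> ennreal" where
  "Sinf s V K TYPE('a) q R = (SUP u \<in> {u \<in> (HsV_rad s V :: ('a \<Rightarrow> real) set). HsV_norm s V u = 1}.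
      wint K q (- ball 0 R) u)"

definition LqK :: "(real \<Rightarrow> real) \<Rightarrow> real \<Rightarrow> ('a::euclidean_space \<Rightarrow> real) set" where
  "LqK K q = {u. u \<in> borel_measurable lborel \<and> wint K q UNIV u < \<infinity>}"

definition LqK_norm :: "(real \<Rightarrow> real) \<Rightarrow> real \<Rightarrow> ('a::euclidean_space \<Rightarrow> real) \<Rightarrow> real" where
  "LqK_norm K q u = enn2real (wint K q UNIV u) powr (1 / q)"

definition LsumK :: "(real \<Rightarrow> real) \<Rightarrow> real \<Rightarrow> real \<Rightarrow> ('a::euclidean_space \<Rightarrow> real) set" where
  "LsumK K q1 q2 = {u. \<exists>u1 u2. u1 \<in> LqK K q1 \<and> u2 \<in> LqK K q2 \<and> u = (\<lambda>x. u1 x + u2 x)}"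

definition LsumK_norm :: "(real \<Rightarrow> real) \<Rightarrow> real \<Rightarrow> real \<Rightarrow> ('a::euclidean_space \<Rightarrow> real) \<Rightarrow> real" where
  "LsumK_norm K q1 q2 u = Inf {max (LqK_norm K q1 u1) (LqK_norm K q2 u2) | u1 u2.
      u1 \<in> LqK K q1 \<and> u2 \<in> LqK K q2 \<and> u = (\<lambda>x. u1 x + u2 x)}"

definition cont_embedded :: "real \<Rightarrow> (real \<Rightarrow> real) \<Rightarrow> (real \<Rightarrow> real) \<Rightarrow> 'a::euclidean_space itself \<Rightarrow> real \<Rightarrow> real \<Rightarrow> bool" where
  "cont_embedded s V K TYPE('a) q1 q2 \<longleftrightarrow>
     (HsV_rad s V :: ('a \<Rightarrow> real) set) \<subseteq> LsumK K q1 q2 \<and>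
     (\<exists>C. \<forall>u \<in> (HsV_rad s V :: ('a \<Rightarrow> real) set). LsumK_norm K q1 q2 u \<le> C * HsV_norm s V u)"

end

theory Submission
  imports Defs
begin

lemma abs_le_amgm:
  fixes d e :: real
  assumes "e > 0"
  shows "\<bar>d\<bar> \<le> e / 2 + d\<^sup>2 / (2 * e)"
proof -
  have "0 \<le> (\<bar>d\<bar> - e)\<^sup>2" by simp
  then have "2 * e * \<bar>d\<bar> \<le> e\<^sup>2 + d\<^sup>2" by (simp add: power2_eq_square algebra_simps)
  then show ?thesis using assms by (simp add: field_simps power2_eq_square)
qed

lemma abs_le_one_plus_powr:
  fixes t p :: real
  assumes "1 \<le> p"
  shows "\<bar>t\<bar> \<le> 1 + \<bar>t\<bar> powr p"
proof (cases "\<bar>t\<bar> \<le> 1")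
  case True
  then show ?thesis using powr_ge_zero[of "\<bar>t\<bar>" p] by linarith
next
  case False
  then show ?thesis using powr_mono[OF assms, of "\<bar>t\<bar>"] by simp
qed

lemma one_minus_cos_le: "1 - cos (t::real) \<le> t\<^sup>2 / 2"
proof -
  have "1 - cos t = 2 * (sin (t/2))\<^sup>2"
    using cos_double_sin[of "t/2"] by simp
  moreover have "(sin (t/2))\<^sup>2 \<le> (t/2)\<^sup>2"
    using abs_sin_x_le_abs_x[of "t/2"] by (metis abs_le_square_iff)
  ultimately show ?thesis by (simp add: power_divide)
qed

lemma power_sub_power_ge:
  fixes r \<rho> :: real
  assumes "0 \<le> r" "0 \<le> \<rho>" "n > 0"
  shows "r ^ (n - 1) * \<rho> \<le> (r + \<rho>) ^ n - r ^ n"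
proof -
  have pow: "x ^ n = x ^ (n - 1) * x" for x :: real
    using \<open>n > 0\<close> by (cases n) auto
  have "r ^ (n - 1) * \<rho> = r ^ (n - 1) * (r + \<rho>) - r ^ n"
    unfolding pow[of r] by (simp add: distrib_left)
  also have "\<dots> \<le> (r + \<rho>) ^ (n - 1) * (r + \<rho>) - r ^ n"
    using assms by (intro diff_right_mono mult_right_mono power_mono) auto
  finally show ?thesis unfolding pow[of "r + \<rho>"] .
qed

lemma power_powr_swap: "0 < x \<Longrightarrow> (x ^ n) powr a = (x powr a) ^ n" for x :: real
  by (simp add: powr_power powr_realpow[symmetric] powr_powr mult.commute)

lemma ex_dyadic_interval:
  assumes "(1::real) \<le> r"
  obtains k :: nat where "2 ^ k \<le> r" "r < 2 ^ Suc k"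
proof -
  define k where "k = nat \<lfloor>log 2 r\<rfloor>"
  have "\<lfloor>log 2 r\<rfloor> = int k" using assms by (simp add: k_def)
  then have "2 powr real k \<le> r \<and> r < 2 powr (real k + 1)"
    using floor_log_eq_powr_iff[of r 2 "int k"] assms by simp
  then show ?thesis using that[of k] by (simp add: powr_add powr_realpow)
qed

lemma abs_dyadic_telescope_le:
  fixes a :: "real \<Rightarrow> real"
  assumes b: "b > 0" and C: "C \<ge> 0" and r: "r > 0"
    and step: "\<And>\<rho>. 0 < \<rho> \<Longrightarrow> \<bar>a \<rho> - a (\<rho> / 2)\<bar> \<le> C * \<rho> powr b"
  shows "\<bar>a (r / 2 ^ j) - a r\<bar> \<le> C * r powr b / (1 - 2 powr - b)"
proof -
  define q where "q = 2 powr - b"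
  have q: "0 < q" "q < 1" using b by (auto simp: q_def powr_less_one)
  have scale: "C * (r / 2 ^ i) powr b = C * r powr b * q ^ i" for i :: nat
  proof -
    have "(2 ^ i) powr b = (2 powr b) ^ i" by (simp add: power_powr_swap)
    moreover have "q ^ i = inverse ((2 powr b) ^ i)" by (simp add: q_def powr_minus power_inverse)
    moreover have "(r / 2 ^ i) powr b = r powr b / (2 ^ i) powr b"
      using r by (intro powr_divide)
    ultimately show ?thesis by (simp add: divide_inverse)
  qed
  have "\<bar>a (r / 2 ^ j) - a r\<bar> \<le> (\<Sum>i<j. C * r powr b * q ^ i)"
  proof (induction j)
    case (Suc j)
    have half: "r / 2 ^ Suc j = r / 2 ^ j / 2" by simp
    have "\<bar>a (r / 2 ^ Suc j) - a r\<bar> \<le> \<bar>a (r / 2 ^ j) - a r\<bar> + \<bar>a (r / 2 ^ j) - a (r / 2 ^ j / 2)\<bar>"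
      unfolding half by arith
    also have "\<dots> \<le> (\<Sum>i<j. C * r powr b * q ^ i) + C * r powr b * q ^ j"
      using Suc.IH step[of "r / 2 ^ j"] r scale[of j] by simp
    finally show ?case by simp
  qed simp
  also have "\<dots> \<le> (\<Sum>i. C * r powr b * q ^ i)"
    using q C by (intro sum_le_suminf summable_mult summable_geometric) auto
  also have "\<dots> = C * r powr b / (1 - q)"
    using q by (simp add: suminf_mult suminf_geometric summable_geometric divide_inverse)
  finally show ?thesis by (simp add: q_def)
qed

lemma ennreal_add_mult:
  "0 \<le> a \<Longrightarrow> 0 \<le> b \<Longrightarrow> 0 \<le> c \<Longrightarrow> ennreal a + ennreal b * ennreal c = ennreal (a + b * c)"
  by (simp add: ennreal_mult)

lemma ennreal_mult_add_mult:
  "0 \<le> a \<Longrightarrow> 0 \<le> b \<Longrightarrow> 0 \<le> c \<Longrightarrow> 0 \<le> d \<Longrightarrow>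
    ennreal a * ennreal b + ennreal c * ennreal d = ennreal (a * b + c * d)"
  by (simp add: ennreal_mult)

lemma ennreal_le_divide_of_mult_le:
  assumes "c > 0" "x * ennreal c \<le> ennreal b * y" "b \<ge> 0"
  shows "x \<le> ennreal (b / c) * y"
proof -
  have "x = x * ennreal c * ennreal (1 / c)"
    using assms(1) by (simp add: mult.assoc ennreal_mult[symmetric])
  also have "\<dots> \<le> ennreal b * y * ennreal (1 / c)" by (intro mult_right_mono assms(2)) simp
  also have "\<dots> = ennreal (b / c) * y"
    using assms by (simp add: ac_simps ennreal_mult[symmetric])
  finally show ?thesis .
qed

section \<open>Lebesgue measure on Euclidean space\<close>

lemma sets_ball [measurable]: "ball (c::'a::euclidean_space) r \<in> sets borel"
  by simp

lemma measurable_indicator_ball [measurable]: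
  fixes f g :: "'b \<Rightarrow> 'a::euclidean_space"
  assumes [measurable]: "f \<in> borel_measurable M" "g \<in> borel_measurable M"
  shows "(\<lambda>x. indicator (ball (f x) r) (g x) :: ennreal) \<in> borel_measurable M"
  unfolding indicator_def mem_ball by measurable

lemma open_disjoint_balls_exhaust:
  fixes U :: "'a::euclidean_space set"
  assumes U: "open U"
  obtains C where "countable C" "\<And>i. i \<in> C \<Longrightarrow> ball (fst i) (snd i) \<subseteq> U"
    "disjoint_family_on (\<lambda>i. ball (fst i) (snd i)) C"
    "negligible (U - (\<Union>i \<in> C. ball (fst i) (snd i)))"
proof -
  define \<B> where "\<B> = {(c::'a, r::real). 0 < r \<and> ball c r \<subseteq> U}"
  have "\<exists>i. i \<in> \<B> \<and> x \<in> ball (fst i) (snd i) \<and> snd i < d" if "x \<in> U" "0 < d" for x d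
  proof -
    obtain e where "e > 0" "ball x e \<subseteq> U" using U \<open>x \<in> U\<close> open_contains_ball by blast
    then show ?thesis
      using \<open>0 < d\<close> by (intro exI[of _ "(x, min e (d/2))"]) (auto simp: \<B>_def)
  qed
  then obtain C where C: "countable C" "C \<subseteq> \<B>"
     "pairwise (\<lambda>i j. disjnt (ball (fst i) (snd i)) (ball (fst j) (snd j))) C"
     "negligible (U - (\<Union>i \<in> C. ball (fst i) (snd i)))"
    using Vitali_covering_theorem_balls[of U \<B> fst snd] by blast
  moreover have "disjoint_family_on (\<lambda>i. ball (fst i) (snd i)) C"
    using C(3) by (auto simp: disjoint_family_on_def pairwise_def disjnt_def)
  ultimately show ?thesis using that by (force simp: \<B>_def)
qed

text \<open>Reflections are the only isometries needed: one of them maps any point to any other point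
  of the same norm. Preservation of Lebesgue measure is proved by exhausting open sets with
  disjoint balls, which such maps permute.\<close>
definition isometric_involution :: "('a::euclidean_space \<Rightarrow> 'a) \<Rightarrow> bool" where
  "isometric_involution H \<longleftrightarrow> linear H \<and> (\<forall>x. H (H x) = x) \<and> (\<forall>x. norm (H x) = norm x)"

context
  fixes H :: "'a::euclidean_space \<Rightarrow> 'a"
  assumes H: "isometric_involution H"
begin

lemma isometric_involution_linear: "linear H"
  and isometric_involution_involutive: "H (H x) = x"
  and isometric_involution_norm: "norm (H x) = norm x"
  using H by (auto simp: isometric_involution_def)

lemma isometric_involution_dist: "dist (H x) (H y) = dist x y"
  using isometric_involution_norm[of "x - y"]
  by (simp add: dist_norm linear_diff[OF isometric_involution_linear])

lemma isometric_involution_vimage: "H -` X = H ` X"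
  by (auto simp: image_iff isometric_involution_involutive) (metis isometric_involution_involutive)

lemma isometric_involution_inj: "inj H"
  by (metis injI isometric_involution_involutive)

lemma isometric_involution_bounded_linear: "bounded_linear H"
  using isometric_involution_linear by (simp add: linear_conv_bounded_linear)

lemma isometric_involution_measurable: "H \<in> borel_measurable borel"
  by (intro borel_measurable_continuous_onI linear_continuous_on isometric_involution_bounded_linear)

lemma isometric_involution_image_ball: "H ` ball c r = ball (H c) r"
  using isometric_involution_dist[of c] isometric_involution_dist[of "H c"]
  by (auto simp: isometric_involution_vimage[symmetric] isometric_involution_involutive)

lemma emeasure_isometric_involution_image:
  assumes U: "open U"
  shows "emeasure lborel (H ` U) = emeasure lborel U"
proof -
  obtain C where C: "countable C" "\<And>i. i \<in> C \<Longrightarrow> ball (fst i) (snd i) \<subseteq> U"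
     "disjoint_family_on (\<lambda>i. ball (fst i) (snd i)) C"
     "negligible (U - (\<Union>i \<in> C. ball (fst i) (snd i)))"
    using open_disjoint_balls_exhaust[OF U] by blast
  define B where "B = (\<Union>i \<in> C. ball (fst i) (snd i))"
  have BU: "B \<subseteq> U" using C(2) by (auto simp: B_def)
  have disjH: "disjoint_family_on (\<lambda>i. ball (H (fst i)) (snd i)) C"
    using C(3) by (auto simp: disjoint_family_on_def isometric_involution_image_ball[symmetric]
        image_Int[OF isometric_involution_inj, symmetric])
  have HB: "H ` B = (\<Union>i \<in> C. ball (H (fst i)) (snd i))"
    by (simp add: B_def image_UN isometric_involution_image_ball)
  have B_sets: "B \<in> sets lborel"
    unfolding B_def using C(1) by (auto intro: sets.countable_UN'')
  have HB_sets: "H ` B \<in> sets lborel"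
    unfolding HB using C(1) by (auto intro: sets.countable_UN'')
  have HU_sets: "H ` U \<in> sets lborel"
    using measurable_sets_borel[OF isometric_involution_measurable, of U] U
    by (simp add: isometric_involution_vimage)
  have "negligible (U - B)" using C(4) by (simp add: B_def)
  moreover have "negligible (H ` (U - B))"
    using C(4) unfolding B_def
    by (intro negligible_differentiable_image_negligible bounded_linear_imp_differentiable_on
        isometric_involution_bounded_linear) auto
  ultimately have "U - B \<in> null_sets lborel" "H ` U - H ` B \<in> null_sets lborel"
    using U B_sets HB_sets HU_sets
    by (auto simp: image_set_diff[OF isometric_involution_inj] negligible_iff_null_sets
        null_sets_completion_iff)
  moreover have "U = B \<union> (U - B)" "H ` U = H ` B \<union> (H ` U - H ` B)" using BU by auto
  ultimately have "emeasure lborel U = emeasure lborel B"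
    and "emeasure lborel (H ` U) = emeasure lborel (H ` B)"
    using emeasure_Un_null_set[OF B_sets] emeasure_Un_null_set[OF HB_sets] by metis+
  moreover have "emeasure lborel (H ` B) = emeasure lborel B"
  proof -
    have "emeasure lborel (ball (H c) r) = emeasure lborel (ball c r)" for c r
      by (cases "r \<ge> 0") (auto simp: emeasure_ball ball_empty)
    then show ?thesis
      unfolding HB unfolding B_def using C(1,3) disjH by (simp add: emeasure_UN_countable)
  qed
  ultimately show ?thesis by simp
qed

lemma distr_lborel_isometric_involution: "distr lborel borel H = lborel"
proof (rule measure_eqI_generator_eq[where E="{S. open S}" and \<Omega>=UNIV and A="\<lambda>i. ball 0 (real i)"])
  fix X :: "'a set" assume "X \<in> {S. open S}"
  then show "emeasure (distr lborel borel H) X = emeasure lborel X"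
    using isometric_involution_measurable
    by (simp add: emeasure_distr isometric_involution_vimage emeasure_isometric_involution_image)
next
  show "(\<Union>i. ball (0::'a) (real i)) = UNIV"
    by (auto simp: dist_norm) (metis reals_Archimedean2)
  show "emeasure (distr lborel borel H) (ball 0 (real i)) \<noteq> \<infinity>" for i
    using emeasure_lborel_ball_finite[of "0::'a" "real i"] isometric_involution_measurable
    by (simp add: emeasure_distr isometric_involution_vimage emeasure_isometric_involution_image)
qed (auto simp: Int_stable_def sets_borel)

lemma nn_integral_isometric_involution:
  assumes "f \<in> borel_measurable borel"
  shows "(\<integral>\<^sup>+x. f (H x) \<partial>lborel) = (\<integral>\<^sup>+x. f x \<partial>lborel)"
  using nn_integral_distr[of H lborel borel f] assms isometric_involution_measurable
  by (simp add: distr_lborel_isometric_involution)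

end

definition reflection :: "'a::euclidean_space \<Rightarrow> 'a \<Rightarrow> 'a" where
  "reflection u x = x - (2 * (x \<bullet> u) / (u \<bullet> u)) *\<^sub>R u"

lemma isometric_involution_reflection:
  assumes "u \<noteq> 0"
  shows "isometric_involution (reflection u)"
proof -
  have uu: "u \<bullet> u > 0" using assms by simp
  have "linear (reflection u)" unfolding reflection_def
    by (rule linearI) (auto simp: algebra_simps add_divide_distrib)
  moreover have "reflection u (reflection u x) = x" for x
    unfolding reflection_def using uu by (simp add: algebra_simps)
  moreover have "norm (reflection u x) = norm x" for x
  proof -
    have "(norm (reflection u x))\<^sup>2 = (norm x)\<^sup>2"
      unfolding reflection_def power2_norm_eq_inner using uu
      by (simp add: algebra_simps) (simp add: field_simps power2_eq_square inner_commute)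
    then show ?thesis by simp
  qed
  ultimately show ?thesis by (simp add: isometric_involution_def)
qed

lemma isometric_involution_exchanging:
  fixes a b :: "'a::euclidean_space"
  assumes "norm a = norm b"
  obtains H where "isometric_involution H" "H a = b"
proof (cases "a = b")
  case True
  then show ?thesis
    using that[of id] by (simp add: isometric_involution_def linear_id)
next
  case False
  have "a \<bullet> a = b \<bullet> b" using assms by (simp add: power2_norm_eq_inner[symmetric])
  then have uu: "(a - b) \<bullet> (a - b) = 2 * (a \<bullet> (a - b))"
    by (simp add: algebra_simps inner_commute)
  with False have "a \<bullet> (a - b) \<noteq> 0" by auto
  then have "reflection (a - b) a = b" unfolding reflection_def uu by simp
  with False show ?thesis using that isometric_involution_reflection[of "a - b"] by simp
qed

lemma nn_integral_finite_geometric_cover: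
  fixes f :: "'a \<Rightarrow> ennreal" and t :: "nat \<Rightarrow> 'a \<Rightarrow> ennreal"
  assumes "\<And>z. f z \<le> (\<Sum>k. t k z)" "\<And>k. t k \<in> borel_measurable M"
    and "\<And>k. (\<integral>\<^sup>+z. t k z \<partial>M) = ennreal (c * q ^ k)" "c \<ge> 0" "0 \<le> q" "q < 1"
  shows "(\<integral>\<^sup>+z. f z \<partial>M) < \<infinity>"
proof -
  have "(\<integral>\<^sup>+z. f z \<partial>M) \<le> (\<integral>\<^sup>+z. (\<Sum>k. t k z) \<partial>M)"
    by (intro nn_integral_mono assms(1))
  also have "\<dots> = (\<Sum>k. ennreal (c * q ^ k))"
    using assms(2,3) by (simp add: nn_integral_suminf)
  also have "\<dots> = ennreal (\<Sum>k. c * q ^ k)"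
    using assms(4-6) by (intro suminf_ennreal2 summable_mult summable_geometric) auto
  finally show ?thesis by (simp add: order_le_less_trans)
qed

lemma nn_integral_norm_powr_outside_ball_finite:
  assumes p: "p < - real DIM('a)"
  shows "(\<integral>\<^sup>+z. indicator (- ball (0::'a::euclidean_space) 1) z * ennreal (norm z powr p) \<partial>lborel) < \<infinity>"
proof (rule nn_integral_finite_geometric_cover)
  let ?N = "DIM('a)"
  define t where "t k z = ennreal ((2 powr p) ^ k) * indicator (ball (0::'a) (2 ^ Suc k)) z" for k z
  show "indicator (- ball 0 1) z * ennreal (norm z powr p) \<le> (\<Sum>k. t k z)" for z :: 'a
  proof (cases "norm z < 1")
    case False
    then obtain k where k: "2 ^ k \<le> norm z" "norm z < 2 ^ Suc k"
      using ex_dyadic_interval[of "norm z"] by auto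
    have "norm z powr p \<le> (2 ^ k) powr p" using k p by (intro powr_mono2') auto
    also have "\<dots> = (2 powr p) ^ k" by (simp add: power_powr_swap)
    finally have "indicator (- ball 0 1) z * ennreal (norm z powr p) \<le> t k z"
      using k by (auto simp: t_def indicator_def intro: ennreal_leI)
    also have "t k z \<le> (\<Sum>k. t k z)"
      using sum_le_suminf[OF summableI, of "{k}" "\<lambda>k. t k z"] by simp
    finally show ?thesis .
  qed (simp add: indicator_def)
  show "(\<integral>\<^sup>+z. t k z \<partial>lborel) = ennreal (unit_ball_vol ?N * 2 ^ ?N * (2 powr (p + ?N)) ^ k)" for k
  proof -
    have "(2 powr p) ^ k * (2 ^ Suc k) ^ ?N = 2 ^ ?N * (2 powr p * 2 ^ ?N) ^ k"
      by (simp add: power_mult_distrib power_mult[symmetric] mult.commute)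
    also have "2 powr p * 2 ^ ?N = 2 powr (p + ?N)" by (simp add: powr_add powr_realpow)
    finally have "(2 powr p) ^ k * (unit_ball_vol ?N * (2 ^ Suc k) ^ ?N)
        = unit_ball_vol ?N * 2 ^ ?N * (2 powr (p + ?N)) ^ k"
      by (simp only: ac_simps)
    moreover have "(\<integral>\<^sup>+z. t k z \<partial>lborel) = ennreal ((2 powr p) ^ k) * ennreal (unit_ball_vol ?N * (2 ^ Suc k) ^ ?N)"
      by (simp add: t_def nn_integral_cmult_indicator emeasure_ball del: power_Suc)
    ultimately show ?thesis by (metis ennreal_mult' zero_le_power powr_ge_zero)
  qed
  show "2 powr (p + ?N) < 1" using p powr_less_mono[of "p + ?N" 0 2] by simp
  show "t k \<in> borel_measurable lborel" for k
    unfolding t_def[abs_def] by (intro borel_measurable_times_ennreal borel_measurable_indicator) auto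
qed simp_all

lemma nn_integral_norm_powr_ball_finite_nonpos:
  assumes p: "- real DIM('a) < p" "p \<le> 0"
  shows "(\<integral>\<^sup>+z. indicator (ball (0::'a::euclidean_space) 1) z * ennreal (norm z powr p) \<partial>lborel) < \<infinity>"
proof (rule nn_integral_finite_geometric_cover)
  let ?N = "DIM('a)"
  define t where "t k z = ennreal ((2 powr - p) ^ Suc k) * indicator (cball (0::'a) ((1/2) ^ k)) z" for k z
  show "indicator (ball 0 1) z * ennreal (norm z powr p) \<le> (\<Sum>k. t k z)" for z :: 'a
  proof (cases "z \<noteq> 0 \<and> norm z < 1")
    case True
    then obtain k where k: "2 ^ k \<le> 1 / norm z" "1 / norm z < 2 ^ Suc k"
      using ex_dyadic_interval[of "1 / norm z"] by auto
    then have k': "(1/2) ^ Suc k < norm z" "norm z \<le> (1/2) ^ k"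
      using True by (auto simp: field_simps)
    have "norm z powr p \<le> ((1/2) ^ Suc k) powr p" using k' p by (intro powr_mono2') auto
    also have "\<dots> = ((1/2) powr p) ^ Suc k" by (rule power_powr_swap) simp
    also have "(1/2::real) powr p = 2 powr - p" by (simp add: powr_divide powr_minus_divide)
    finally have "indicator (ball 0 1) z * ennreal (norm z powr p) \<le> t k z"
      using k' by (auto simp: t_def indicator_def intro: ennreal_leI)
    also have "t k z \<le> (\<Sum>k. t k z)"
      using sum_le_suminf[OF summableI, of "{k}" "\<lambda>k. t k z"] by simp
    finally show ?thesis .
  qed (auto simp: indicator_def)
  show "(\<integral>\<^sup>+z. t k z \<partial>lborel) = ennreal (unit_ball_vol ?N * 2 powr - p * (2 powr (- p - ?N)) ^ k)" for k
  proof -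
    have "(2 powr - p) ^ Suc k * ((1/2) ^ k) ^ ?N = 2 powr - p * (2 powr - p / 2 ^ ?N) ^ k"
      by (simp add: power_mult_distrib power_mult[symmetric] mult.commute power_divide power_one_over)
    also have "2 powr - p / 2 ^ ?N = 2 powr (- p - ?N)" by (simp add: powr_diff powr_realpow)
    finally have "(2 powr - p) ^ Suc k * (unit_ball_vol ?N * ((1/2) ^ k) ^ ?N)
        = unit_ball_vol ?N * 2 powr - p * (2 powr (- p - ?N)) ^ k"
      by (simp only: ac_simps)
    moreover have "(\<integral>\<^sup>+z. t k z \<partial>lborel)
        = ennreal ((2 powr - p) ^ Suc k) * ennreal (unit_ball_vol ?N * ((1/2) ^ k) ^ ?N)"
      by (simp add: t_def nn_integral_cmult_indicator emeasure_cball del: power_Suc)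
    ultimately show ?thesis by (metis ennreal_mult' zero_le_power powr_ge_zero)
  qed
  show "2 powr (- p - ?N) < 1" using p powr_less_mono[of "- p - ?N" 0 2] by simp
  show "t k \<in> borel_measurable lborel" for k
    unfolding t_def[abs_def] by (intro borel_measurable_times_ennreal borel_measurable_indicator) auto
qed simp_all

lemma nn_integral_norm_powr_ball_finite:
  assumes p: "- real DIM('a) < p"
  shows "(\<integral>\<^sup>+z. indicator (ball (0::'a::euclidean_space) 1) z * ennreal (norm z powr p) \<partial>lborel) < \<infinity>"
proof (cases "p \<le> 0")
  case False
  have "(\<integral>\<^sup>+z. indicator (ball (0::'a) 1) z * ennreal (norm z powr p) \<partial>lborel)
      \<le> (\<integral>\<^sup>+z. indicator (ball (0::'a) 1) z \<partial>lborel)"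
    using False powr_mono2[of p _ 1] by (intro nn_integral_mono) (auto simp: indicator_def)
  also have "\<dots> < \<infinity>" using emeasure_lborel_ball_finite by simp
  finally show ?thesis .
qed (use nn_integral_norm_powr_ball_finite_nonpos p in auto)

lemma emeasure_shell_ge:
  assumes "r > 0" "\<rho> > 0"
  shows "ennreal (unit_ball_vol DIM('a) * r ^ (DIM('a) - 1) * \<rho>)
     \<le> emeasure lborel (ball (0::'a::euclidean_space) (r + \<rho>) - ball 0 r)"
proof -
  let ?w = "unit_ball_vol DIM('a)" and ?N = "DIM('a)"
  have "emeasure lborel (ball (0::'a) (r + \<rho>) - ball 0 r) = ennreal (?w * (r + \<rho>) ^ ?N) - ennreal (?w * r ^ ?N)"
    using assms by (subst emeasure_Diff) (auto simp: emeasure_ball)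
  also have "\<dots> = ennreal (?w * ((r + \<rho>) ^ ?N - r ^ ?N))"
    using assms by (subst ennreal_minus) (auto simp: right_diff_distrib)
  finally have shell: "emeasure lborel (ball (0::'a) (r + \<rho>) - ball 0 r) = ennreal (?w * ((r + \<rho>) ^ ?N - r ^ ?N))" .
  have "?w * (r ^ (?N - 1) * \<rho>) \<le> ?w * ((r + \<rho>) ^ ?N - r ^ ?N)"
    using power_sub_power_ge[of r \<rho> ?N] assms by (intro mult_left_mono) auto
  then show ?thesis unfolding shell mult.assoc by (rule ennreal_leI)
qed

lemma measurable_radial_profile:
  fixes K :: "real \<Rightarrow> real"
  assumes K: "continuous_on {0<..} K"
  shows "(\<lambda>x::'a::euclidean_space. K (norm x)) \<in> borel_measurable borel"
proof -
  have [measurable]: "(\<lambda>t. indicator {0<..} t *\<^sub>R K t) \<in> borel_measurable borel"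
    by (rule borel_measurable_continuous_on_indicator[OF _ K]) simp
  have "(\<lambda>x::'a. indicator {0<..} (norm x) *\<^sub>R K (norm x) + (if norm x = 0 then K 0 else 0))
      \<in> borel_measurable borel"
    by measurable
  also have "(\<lambda>x::'a. indicator {0<..} (norm x) *\<^sub>R K (norm x) + (if norm x = 0 then K 0 else 0))
      = (\<lambda>x. K (norm x))"
    by (auto simp: indicator_def fun_eq_iff)
  finally show ?thesis .
qed

definition average :: "'a::euclidean_space set \<Rightarrow> ('a \<Rightarrow> real) \<Rightarrow> real" where
  "average S v = (\<integral>y. indicator S y * v y \<partial>lborel) / measure lborel S"

lemma abs_integral_divide_le:
  fixes f :: "'a \<Rightarrow> real" and g :: "'a \<Rightarrow> ennreal"
  assumes P: "P \<in> sets M" and mP: "emeasure M P = ennreal m" "m > 0"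
    and f: "integrable M (\<lambda>y. indicator P y * f y)" and g: "g \<in> borel_measurable M"
    and bound: "\<And>y. y \<in> P \<Longrightarrow> ennreal \<bar>f y\<bar> \<le> ennreal a + ennreal b * g y"
    and ab: "a \<ge> 0" "b \<ge> 0"
  shows "ennreal \<bar>(\<integral>y. indicator P y * f y \<partial>M) / m\<bar>
    \<le> ennreal a + ennreal (b / m) * (\<integral>\<^sup>+y. indicator P y * g y \<partial>M)"
proof -
  let ?I = "\<integral>y. indicator P y * f y \<partial>M" and ?G = "\<integral>\<^sup>+y. indicator P y * g y \<partial>M"
  have "ennreal \<bar>?I\<bar> \<le> (\<integral>\<^sup>+y. norm (indicator P y * f y) \<partial>M)"
    using integral_norm_bound_ennreal[OF f] by simp
  also have "\<dots> \<le> (\<integral>\<^sup>+y. ennreal a * indicator P y + ennreal b * (indicator P y * g y) \<partial>M)"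
    by (intro nn_integral_mono) (auto simp: indicator_def bound)
  also have "\<dots> = ennreal a * ennreal m + ennreal b * ?G"
    using P g mP by (subst nn_integral_add) (auto simp: nn_integral_cmult_indicator nn_integral_cmult)
  finally have "ennreal (1 / m) * ennreal \<bar>?I\<bar> \<le> ennreal (1 / m) * (ennreal a * ennreal m + ennreal b * ?G)"
    by (rule mult_left_mono) simp
  moreover have "ennreal (1 / m) * ennreal \<bar>?I\<bar> = ennreal \<bar>?I / m\<bar>"
    using mP by (simp add: ennreal_mult[symmetric])
  moreover have "ennreal (1 / m) * (ennreal a * ennreal m + ennreal b * ?G) = ennreal a + ennreal (b / m) * ?G"
    using mP ab by (simp add: distrib_left mult.assoc[symmetric] ennreal_mult[symmetric])
  ultimately show ?thesis by simp
qed

context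
  fixes v :: "'a::euclidean_space \<Rightarrow> real" and Q :: "'a set" and m e :: real
  assumes v [measurable]: "v \<in> borel_measurable borel" and Q [measurable]: "Q \<in> sets borel"
    and mQ: "emeasure lborel Q = ennreal m" "m > 0"
    and vQ: "integrable lborel (\<lambda>y. indicator Q y * v y)" and e: "e > 0"
begin

lemma abs_diff_average_le:
  "ennreal \<bar>v x - average Q v\<bar>
    \<le> ennreal (e / 2) + ennreal (1 / (2 * e) / m) * (\<integral>\<^sup>+z. indicator Q z * ennreal ((v x - v z)\<^sup>2) \<partial>lborel)"
proof -
  have measQ: "measure lborel Q = m" using mQ by (simp add: measure_def)
  have const: "integrable lborel (\<lambda>z. v x * indicator Q z)"
    using mQ by (intro integrable_mult_right integrable_real_indicator) auto
  have "(\<integral>z. indicator Q z * (v x - v z) \<partial>lborel) = v x * m - (\<integral>z. indicator Q z * v z \<partial>lborel)"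
    using Bochner_Integration.integral_diff[OF const vQ] mQ by (simp add: algebra_simps measQ)
  then have "(\<integral>z. indicator Q z * (v x - v z) \<partial>lborel) / m = v x - average Q v"
    using mQ by (simp add: average_def measQ field_simps)
  moreover have "ennreal \<bar>(\<integral>z. indicator Q z * (v x - v z) \<partial>lborel) / m\<bar>
      \<le> ennreal (e / 2) + ennreal (1 / (2 * e) / m) * (\<integral>\<^sup>+z. indicator Q z * ennreal ((v x - v z)\<^sup>2) \<partial>lborel)"
  proof (rule abs_integral_divide_le[OF _ mQ])
    show "integrable lborel (\<lambda>z. indicator Q z * (v x - v z))"
      using Bochner_Integration.integrable_diff[OF const vQ] by (simp add: algebra_simps)
    show "ennreal \<bar>v x - v z\<bar> \<le> ennreal (e / 2) + ennreal (1 / (2 * e)) * ennreal ((v x - v z)\<^sup>2)" for z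
    proof -
      have "ennreal \<bar>v x - v z\<bar> \<le> ennreal (e / 2 + 1 / (2 * e) * (v x - v z)\<^sup>2)"
        using abs_le_amgm[OF e, of "v x - v z"] by (intro ennreal_leI) simp
      also have "\<dots> = ennreal (e / 2) + ennreal (1 / (2 * e)) * ennreal ((v x - v z)\<^sup>2)"
        using e by (simp flip: ennreal_mult)
      finally show ?thesis .
    qed
  qed (use e in auto)
  ultimately show ?thesis by simp
qed

lemma abs_average_diff_le:
  assumes [measurable]: "P \<in> sets borel" and mP: "emeasure lborel P = ennreal n" "n > 0"
    and vP: "integrable lborel (\<lambda>y. indicator P y * v y)"
  shows "ennreal \<bar>average P v - average Q v\<bar> \<le> ennreal (e / 2) + ennreal (1 / (2 * e) / m / n) *
     (\<integral>\<^sup>+y. indicator P y * (\<integral>\<^sup>+z. indicator Q z * ennreal ((v y - v z)\<^sup>2) \<partial>lborel) \<partial>lborel)"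
proof -
  have measP: "measure lborel P = n" using mP by (simp add: measure_def)
  have const: "integrable lborel (\<lambda>z. indicator P z * average Q v)"
    using mP by (intro integrable_mult_left integrable_real_indicator) auto
  have "(\<integral>y. indicator P y * (v y - average Q v) \<partial>lborel) = (\<integral>y. indicator P y * v y \<partial>lborel) - n * average Q v"
    using Bochner_Integration.integral_diff[OF vP const] by (simp add: algebra_simps measP)
  then have "(\<integral>y. indicator P y * (v y - average Q v) \<partial>lborel) / n = average P v - average Q v"
    using mP by (simp add: average_def measP field_simps)
  moreover have "ennreal \<bar>(\<integral>y. indicator P y * (v y - average Q v) \<partial>lborel) / n\<bar> \<le> ennreal (e / 2) + ennreal (1 / (2 * e) / m / n) *
     (\<integral>\<^sup>+y. indicator P y * (\<integral>\<^sup>+z. indicator Q z * ennreal ((v y - v z)\<^sup>2) \<partial>lborel) \<partial>lborel)"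
  proof (rule abs_integral_divide_le[OF _ mP])
    show "integrable lborel (\<lambda>y. indicator P y * (v y - average Q v))"
      using Bochner_Integration.integrable_diff[OF vP const] by (simp add: algebra_simps)
    show "ennreal \<bar>v y - average Q v\<bar> \<le> ennreal (e / 2) + ennreal (1 / (2 * e) / m) *
        (\<integral>\<^sup>+z. indicator Q z * ennreal ((v y - v z)\<^sup>2) \<partial>lborel)" for y
      by (rule abs_diff_average_le)
  qed (use e mQ in auto)
  ultimately show ?thesis by simp
qed

end

section \<open>The Gagliardo energy\<close>

definition gagliardo_kernel :: "real \<Rightarrow> ('a::euclidean_space \<Rightarrow> real) \<Rightarrow> 'a \<Rightarrow> 'a \<Rightarrow> real" where
  "gagliardo_kernel s v y z = (v y - v z)\<^sup>2 / norm (y - z) powr (real DIM('a) + 2 * s)"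

definition gagliardo_energy :: "real \<Rightarrow> ('a::euclidean_space \<Rightarrow> real) \<Rightarrow> ennreal" where
  "gagliardo_energy s v = (\<integral>\<^sup>+y. \<integral>\<^sup>+z. ennreal (gagliardo_kernel s v y z) \<partial>lborel \<partial>lborel)"

lemma gagliardo_kernel_nonneg: "gagliardo_kernel s v y z \<ge> 0"
  by (simp add: gagliardo_kernel_def)

lemma measurable_gagliardo_kernel [measurable]:
  assumes [measurable]: "v \<in> borel_measurable borel" "f \<in> borel_measurable M" "g \<in> borel_measurable M"
  shows "(\<lambda>x. gagliardo_kernel s v (f x) (g x)) \<in> borel_measurable M"
  unfolding gagliardo_kernel_def by measurable

lemma gagliardo_sq_eq_energy:
  assumes [measurable]: "u \<in> borel_measurable borel"
  shows "gagliardo_sq s u = ennreal (CNs TYPE('a) s / 2) * gagliardo_energy s (u::'a::euclidean_space \<Rightarrow> real)"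
  using lborel.nn_integral_fst[of "\<lambda>p. ennreal (gagliardo_kernel s u (fst p) (snd p))"]
  by (simp add: gagliardo_sq_def gagliardo_energy_def gagliardo_kernel_def)

context
  fixes e :: "'a::euclidean_space" and a :: real
  assumes e: "e \<in> Basis"
begin

lemma CNs_integrand_le:
  "ennreal ((1 - cos (z \<bullet> e)) / norm z powr a)
     \<le> indicator (ball 0 1) z * ennreal (norm z powr (2 - a))
       + 2 * (indicator (- ball 0 1) z * ennreal (norm z powr (- a)))"
proof (cases "norm z < 1")
  case True
  have "1 - cos (z \<bullet> e) \<le> (z \<bullet> e)\<^sup>2 / 2" by (rule one_minus_cos_le)
  also have "\<dots> \<le> (norm z)\<^sup>2"
  proof -
    have "(z \<bullet> e)\<^sup>2 \<le> (norm z)\<^sup>2"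
      using Basis_le_norm[OF e, of z] abs_le_square_iff[of "z \<bullet> e" "norm z"] by simp
    then show ?thesis using zero_le_power2[of "norm z"] by linarith
  qed
  finally have "(1 - cos (z \<bullet> e)) / norm z powr a \<le> norm z powr 2 / norm z powr a"
    by (cases "z = 0") (auto intro: divide_right_mono simp: powr_realpow)
  then show ?thesis
    using True by (cases "z = 0") (auto simp: powr_diff intro!: ennreal_leI add_increasing2)
next
  case False
  then have "(1 - cos (z \<bullet> e)) / norm z powr a \<le> 2 / norm z powr a"
    using cos_ge_minus_one[of "z \<bullet> e"] by (intro divide_right_mono) auto
  then have "ennreal ((1 - cos (z \<bullet> e)) / norm z powr a) \<le> ennreal 2 * ennreal (norm z powr (- a))"
    by (subst ennreal_mult[symmetric]) (auto intro: ennreal_leI simp: powr_minus divide_inverse)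
  then show ?thesis using False by (simp add: indicator_def)
qed

lemma CNs_integrand_ge:
  assumes a: "a > 0" and z: "z \<in> ball (pi *\<^sub>R e) 1"
  shows "1 / (pi + 1) powr a \<le> (1 - cos (z \<bullet> e)) / norm z powr a"
proof -
  have ne: "norm e = 1" using e by simp
  have d: "norm (z - pi *\<^sub>R e) < 1" using z by (simp add: dist_norm norm_minus_commute)
  have "\<bar>(z - pi *\<^sub>R e) \<bullet> e\<bar> \<le> norm (z - pi *\<^sub>R e)" by (rule Basis_le_norm[OF e])
  moreover have "(z - pi *\<^sub>R e) \<bullet> e = z \<bullet> e - pi"
    using ne by (simp add: inner_diff_left norm_eq_1[symmetric])
  ultimately have "cos (z \<bullet> e - pi) > 0" using d pi_gt3 by (intro cos_gt_zero_pi) auto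
  then have cos_le: "1 \<le> 1 - cos (z \<bullet> e)" by simp
  have "norm z \<le> pi + 1" "pi - 1 \<le> norm z"
    using d ne norm_triangle_sub[of z "pi *\<^sub>R e"] norm_triangle_ineq2[of "pi *\<^sub>R e" z]
    by (auto simp: norm_minus_commute)
  then have "0 < norm z powr a" "norm z powr a \<le> (pi + 1) powr a"
    using a pi_gt3 by (auto intro: powr_mono2)
  then show ?thesis
    using cos_le by (intro frac_le) auto
qed

end

lemma CNs_pos:
  assumes s: "0 < s" "s < 1"
  shows "CNs TYPE('a::euclidean_space) s > 0"
proof -
  let ?a = "real DIM('a) + 2 * s"
  define e where "e = (first_coord::'a)"
  have e: "e \<in> Basis" unfolding e_def first_coord_def by (rule someI_ex) (use nonempty_Basis in blast)
  define I where "I = (\<integral>\<^sup>+ z. ennreal ((1 - cos (z \<bullet> e)) / norm z powr ?a) \<partial>(lborel::'a measure))"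
  have "I \<le> (\<integral>\<^sup>+ z. indicator (ball (0::'a) 1) z * ennreal (norm z powr (2 - ?a))
       + 2 * (indicator (- ball (0::'a) 1) z * ennreal (norm z powr (- ?a))) \<partial>lborel)"
    unfolding I_def by (intro nn_integral_mono) (rule CNs_integrand_le[OF e])
  also have "\<dots> = (\<integral>\<^sup>+ z. indicator (ball (0::'a) 1) z * ennreal (norm z powr (2 - ?a)) \<partial>lborel)
       + 2 * (\<integral>\<^sup>+ z. indicator (- ball (0::'a) 1) z * ennreal (norm z powr (- ?a)) \<partial>lborel)"
    by (subst nn_integral_add) (auto simp: nn_integral_cmult)
  also have "\<dots> < \<infinity>"
    using s nn_integral_norm_powr_ball_finite[of "2 - ?a", where 'a='a]
      nn_integral_norm_powr_outside_ball_finite[of "- ?a", where 'a='a]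
    by (simp add: ennreal_mult_less_top)
  finally have "I < \<infinity>" .
  have "0 < ennreal (1 / (pi + 1) powr ?a) * emeasure lborel (ball (pi *\<^sub>R e) 1)"
    using pi_gt3 by (simp add: emeasure_ball ennreal_zero_less_mult_iff)
  also have "\<dots> = (\<integral>\<^sup>+ z. ennreal (1 / (pi + 1) powr ?a) * indicator (ball (pi *\<^sub>R e) 1) z \<partial>lborel)"
    by (simp add: nn_integral_cmult_indicator)
  also have "\<dots> \<le> I"
    unfolding I_def using CNs_integrand_ge[OF e, of ?a] s
    by (intro nn_integral_mono) (auto simp: indicator_def intro: ennreal_leI)
  finally have "0 < enn2real I" using \<open>I < \<infinity>\<close> by (simp add: enn2real_positive_iff)
  then show ?thesis by (simp add: CNs_def I_def e_def)
qed

lemma sq_diff_le_kernel: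
  assumes "norm (y - z) \<le> D" "s \<ge> 0"
  shows "ennreal ((v y - v z)\<^sup>2)
    \<le> ennreal (D powr (real DIM('a) + 2 * s)) * ennreal (gagliardo_kernel s v y (z::'a::euclidean_space))"
proof (cases "y = z")
  case False
  let ?a = "real DIM('a) + 2 * s"
  have "(v y - v z)\<^sup>2 = norm (y - z) powr ?a * gagliardo_kernel s v y z"
    using False by (simp add: gagliardo_kernel_def)
  also have "\<dots> \<le> D powr ?a * gagliardo_kernel s v y z"
    using assms by (intro mult_right_mono powr_mono2) (auto simp: gagliardo_kernel_nonneg)
  finally show ?thesis
    using gagliardo_kernel_nonneg[of s v y z] by (simp add: ennreal_mult[symmetric] ennreal_leI)
qed simp

lemma nn_integral_sq_diff_le_kernel:
  fixes v :: "'a::euclidean_space \<Rightarrow> real"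
  assumes [measurable]: "v \<in> borel_measurable borel" "P \<in> sets borel" "Q \<in> sets borel"
    and D: "\<And>y z. y \<in> P \<Longrightarrow> z \<in> Q \<Longrightarrow> norm (y - z) \<le> D" and "s \<ge> 0"
  shows "(\<integral>\<^sup>+y. indicator P y * (\<integral>\<^sup>+z. indicator Q z * ennreal ((v y - v z)\<^sup>2) \<partial>lborel) \<partial>lborel)
    \<le> ennreal (D powr (real DIM('a) + 2 * s)) *
      (\<integral>\<^sup>+y. \<integral>\<^sup>+z. indicator P y * indicator Q z * ennreal (gagliardo_kernel s v y z) \<partial>lborel \<partial>lborel)"
proof -
  let ?c = "ennreal (D powr (real DIM('a) + 2 * s))"
  have "(\<integral>\<^sup>+y. indicator P y * (\<integral>\<^sup>+z. indicator Q z * ennreal ((v y - v z)\<^sup>2) \<partial>lborel) \<partial>lborel)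
      \<le> (\<integral>\<^sup>+y. \<integral>\<^sup>+z. ?c * (indicator P y * indicator Q z * ennreal (gagliardo_kernel s v y z)) \<partial>lborel \<partial>lborel)"
  proof (intro nn_integral_mono)
    fix y
    have "indicator P y * indicator Q z * ennreal ((v y - v z)\<^sup>2)
       \<le> ?c * (indicator P y * indicator Q z * ennreal (gagliardo_kernel s v y z))" for z
      using D[of y z] sq_diff_le_kernel[of y z D s v] \<open>s \<ge> 0\<close>
      by (auto simp: indicator_def)
    then show "indicator P y * (\<integral>\<^sup>+z. indicator Q z * ennreal ((v y - v z)\<^sup>2) \<partial>lborel)
       \<le> (\<integral>\<^sup>+z. ?c * (indicator P y * indicator Q z * ennreal (gagliardo_kernel s v y z)) \<partial>lborel)"
      by (auto simp: nn_integral_cmult[symmetric] mult.assoc intro!: nn_integral_mono)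
  qed
  also have "\<dots> = ?c * (\<integral>\<^sup>+y. \<integral>\<^sup>+z. indicator P y * indicator Q z * ennreal (gagliardo_kernel s v y z) \<partial>lborel \<partial>lborel)"
    by (simp add: nn_integral_cmult)
  finally show ?thesis .
qed

lemma nn_integral_indicator_kernel_le_energy:
  assumes [measurable]: "v \<in> borel_measurable borel"
  shows "(\<integral>\<^sup>+y. \<integral>\<^sup>+z. indicator P y * indicator Q z * ennreal (gagliardo_kernel s v y z) \<partial>lborel \<partial>lborel)
    \<le> gagliardo_energy s (v::'a::euclidean_space \<Rightarrow> real)"
  unfolding gagliardo_energy_def
  by (intro nn_integral_mono) (auto simp: indicator_def)

lemma nn_integral_local_sq_diff_le:
  fixes v :: "'a::euclidean_space \<Rightarrow> real" and s :: real
  assumes [measurable]: "v \<in> borel_measurable borel" and s: "s \<ge> 0"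
  shows "(\<integral>\<^sup>+x. \<integral>\<^sup>+z. indicator (ball x \<rho>) z * ennreal ((v x - v z)\<^sup>2) \<partial>lborel \<partial>lborel)
     \<le> ennreal (\<rho> powr (real DIM('a) + 2 * s)) * gagliardo_energy s v"
proof -
  have "(\<integral>\<^sup>+x. \<integral>\<^sup>+z. indicator (ball x \<rho>) z * ennreal ((v x - v z)\<^sup>2) \<partial>lborel \<partial>lborel)
     \<le> (\<integral>\<^sup>+x. \<integral>\<^sup>+z. ennreal (\<rho> powr (real DIM('a) + 2 * s)) * ennreal (gagliardo_kernel s v x z) \<partial>lborel \<partial>lborel)"
    using s by (intro nn_integral_mono) (auto simp: indicator_def dist_norm intro!: sq_diff_le_kernel)
  also have "\<dots> = ennreal (\<rho> powr (real DIM('a) + 2 * s)) * gagliardo_energy s v"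
    by (simp add: gagliardo_energy_def nn_integral_cmult)
  finally show ?thesis .
qed

lemma AE_eq_0_of_gagliardo_energy_eq_0:
  fixes u :: "'a::euclidean_space \<Rightarrow> real"
  assumes [measurable]: "u \<in> borel_measurable borel" and G: "gagliardo_energy s u = 0"
    and L: "(\<integral>\<^sup>+ x. ennreal (\<bar>u x\<bar> powr p) \<partial>lborel) < \<infinity>"
  shows "AE x in lborel. u x = 0"
proof -
  have "AE y in lborel. (\<integral>\<^sup>+z. ennreal (gagliardo_kernel s u y z) \<partial>lborel) = 0"
    using G nn_integral_0_iff_AE[of "\<lambda>y. \<integral>\<^sup>+z. ennreal (gagliardo_kernel s u y z) \<partial>lborel" lborel]
    by (simp add: gagliardo_energy_def)
  then have "AE y in lborel. AE z in lborel. u z = u y"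
  proof eventually_elim
    case (elim y)
    then have "AE z in lborel. gagliardo_kernel s u y z \<le> 0"
      using nn_integral_0_iff_AE[of "\<lambda>z. ennreal (gagliardo_kernel s u y z)" lborel]
      by (simp add: ennreal_eq_0_iff)
    then show ?case
    proof eventually_elim
      case (elim z)
      then have "gagliardo_kernel s u y z = 0" using gagliardo_kernel_nonneg[of s u y z] by simp
      then show ?case by (cases "y = z") (auto simp: gagliardo_kernel_def)
    qed
  qed
  then obtain y where y: "AE z in lborel. u z = u y"
    using eventually_happens ae_filter_eq_bot_iff[of lborel] by fastforce
  have "(\<integral>\<^sup>+ x. ennreal (\<bar>u x\<bar> powr p) \<partial>lborel) = (\<integral>\<^sup>+ x. ennreal (\<bar>u y\<bar> powr p) \<partial>(lborel::'a measure))"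
    using y by (intro nn_integral_cong_AE) auto
  also have "\<dots> = ennreal (\<bar>u y\<bar> powr p) * \<infinity>"
    using nn_integral_cmult_indicator[of UNIV lborel "ennreal (\<bar>u y\<bar> powr p)"] by simp
  finally have "ennreal (\<bar>u y\<bar> powr p) * \<infinity> < \<infinity>" using L by simp
  then have "u y = 0" by (simp add: ennreal_mult_less_top)
  from y show ?thesis by eventually_elim (use \<open>u y = 0\<close> in simp)
qed

definition ball_energy :: "real \<Rightarrow> ('a::euclidean_space \<Rightarrow> real) \<Rightarrow> 'a \<Rightarrow> real \<Rightarrow> ennreal" where
  "ball_energy s v x r = (\<integral>\<^sup>+y. \<integral>\<^sup>+z. indicator (ball x r) y * indicator (ball x r) z
      * ennreal (gagliardo_kernel s v y z) \<partial>lborel \<partial>lborel)"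

lemma ball_energy_mono:
  assumes "ball x r \<subseteq> ball w r'"
  shows "ball_energy s v x r \<le> ball_energy s v w r'"
  unfolding ball_energy_def using assms
  by (intro nn_integral_mono mult_right_mono) (auto simp: indicator_def)

lemma ball_energy_radial:
  assumes [measurable]: "v \<in> borel_measurable borel" and "radial v" and "norm x = norm x'"
  shows "ball_energy s v x r = ball_energy s v x' r"
proof -
  obtain H where H: "isometric_involution H" "H x' = x"
    using isometric_involution_exchanging[OF assms(3)[symmetric]] by blast
  note [measurable] = isometric_involution_measurable[OF H(1)]
  have "v (H a) = v a" for a
    using \<open>radial v\<close> isometric_involution_norm[OF H(1)] unfolding radial_def by blast
  moreover have "dist (H a) (H b) = dist a b" and "norm (H a - H b) = norm (a - b)" for a b
    using isometric_involution_dist[OF H(1)] by (auto simp: dist_norm)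
  moreover have "dist x' (H a) = dist x a" for a
    using H isometric_involution_dist isometric_involution_involutive by metis
  ultimately have kernel: "indicator (ball x' r) (H y) * indicator (ball x' r) (H z)
      * ennreal (gagliardo_kernel s v (H y) (H z))
      = indicator (ball x r) y * indicator (ball x r) z * ennreal (gagliardo_kernel s v y z)" for y z
    by (simp add: indicator_def gagliardo_kernel_def)
  define F where "F y z = indicator (ball x' r) y * indicator (ball x' r) z
      * ennreal (gagliardo_kernel s v y z)" for y z
  have [measurable]: "(\<lambda>y. \<integral>\<^sup>+z. F y z \<partial>lborel) \<in> borel_measurable borel"
    unfolding F_def by measurable
  have [measurable]: "F y \<in> borel_measurable borel" for y
    unfolding F_def[abs_def] by measurable
  have "ball_energy s v x' r = (\<integral>\<^sup>+y. \<integral>\<^sup>+z. F (H y) z \<partial>lborel \<partial>lborel)"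
    unfolding ball_energy_def F_def[symmetric]
    by (rule nn_integral_isometric_involution[OF H(1), symmetric]) measurable
  also have "\<dots> = (\<integral>\<^sup>+y. \<integral>\<^sup>+z. F (H y) (H z) \<partial>lborel \<partial>lborel)"
    by (simp add: nn_integral_isometric_involution[OF H(1)])
  also have "\<dots> = ball_energy s v x r"
    unfolding ball_energy_def F_def kernel ..
  finally show ?thesis ..
qed

lemma nn_integral_ball_energy_le:
  assumes [measurable]: "v \<in> borel_measurable borel" and "\<rho> > 0"
  shows "(\<integral>\<^sup>+w. ball_energy s v w \<rho> \<partial>lborel)
    \<le> ennreal (unit_ball_vol DIM('a) * \<rho> ^ DIM('a)) * gagliardo_energy s (v::'a::euclidean_space \<Rightarrow> real)"
proof -
  define F where "F w y z = indicator (ball w \<rho>) y * indicator (ball w \<rho>) z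
      * ennreal (gagliardo_kernel s v y z)" for w y z :: 'a
  have [measurable]: "(\<lambda>p. F (f p) (g p) (h p)) \<in> borel_measurable M"
    if [measurable]: "f \<in> borel_measurable M" "g \<in> borel_measurable M" "h \<in> borel_measurable M"
    for M and f g h :: "'b \<Rightarrow> 'a"
    unfolding F_def by measurable
  have "(\<integral>\<^sup>+w. ball_energy s v w \<rho> \<partial>lborel)
      = (\<integral>\<^sup>+y. \<integral>\<^sup>+z. \<integral>\<^sup>+w. F w y z \<partial>lborel \<partial>lborel \<partial>lborel)"
    unfolding ball_energy_def F_def[symmetric]
    by (subst lborel_pair.Fubini', measurable, intro nn_integral_cong lborel_pair.Fubini', measurable)
  also have "\<dots> \<le> (\<integral>\<^sup>+y. \<integral>\<^sup>+z. ennreal (unit_ball_vol DIM('a) * \<rho> ^ DIM('a))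
      * ennreal (gagliardo_kernel s v y z) \<partial>lborel \<partial>lborel)"
  proof (intro nn_integral_mono)
    fix y z :: 'a
    have "(\<integral>\<^sup>+w. F w y z \<partial>lborel)
        \<le> (\<integral>\<^sup>+w. ennreal (gagliardo_kernel s v y z) * indicator (ball y \<rho>) w \<partial>lborel)"
      by (intro nn_integral_mono) (auto simp: F_def indicator_def dist_commute)
    also have "\<dots> = ennreal (gagliardo_kernel s v y z) * emeasure lborel (ball y \<rho>)"
      by (rule nn_integral_cmult_indicator) simp
    finally show "(\<integral>\<^sup>+w. F w y z \<partial>lborel)
        \<le> ennreal (unit_ball_vol DIM('a) * \<rho> ^ DIM('a)) * ennreal (gagliardo_kernel s v y z)"
      using \<open>\<rho> > 0\<close> by (simp add: emeasure_ball mult.commute)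
  qed
  also have "\<dots> = ennreal (unit_ball_vol DIM('a) * \<rho> ^ DIM('a)) * gagliardo_energy s v"
    unfolding gagliardo_energy_def
    by (simp add: nn_integral_cmult)
  finally show ?thesis .
qed

lemma ball_energy_radial_le_shifted:
  assumes "v \<in> borel_measurable borel" and rad: "radial v"
    and w: "norm x \<le> norm w" "norm w < norm x + \<rho>" and x: "(x::'a::euclidean_space) \<noteq> 0"
  shows "ball_energy s v x \<rho> \<le> ball_energy s v w (2 * \<rho>)"
proof -
  have "w \<noteq> 0" using w x by auto
  define x' where "x' = (norm x / norm w) *\<^sub>R w"
  have "norm x' = norm x" using \<open>w \<noteq> 0\<close> by (simp add: x'_def)
  moreover have "dist x' w < \<rho>"
  proof -
    have "x' - w = (norm x / norm w - 1) *\<^sub>R w" by (simp add: x'_def algebra_simps)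
    then show ?thesis using w \<open>w \<noteq> 0\<close> by (simp add: dist_norm abs_if divide_simps)
  qed
  then have "ball x' \<rho> \<subseteq> ball w (2 * \<rho>)"
  proof (intro subsetI)
    fix y assume "y \<in> ball x' \<rho>"
    then show "y \<in> ball w (2 * \<rho>)"
      using \<open>dist x' w < \<rho>\<close> dist_triangle[of w y x'] by (simp add: dist_commute)
  qed
  ultimately show ?thesis
    using ball_energy_radial[OF assms(1) rad, of x' x s \<rho>] ball_energy_mono[of x' \<rho> w "2 * \<rho>" s v]
    by simp
qed

text \<open>The energy of a radial function in a ball of radius \<rho> centred at distance r from the
  origin is shared by all rotated balls, which fill a shell of volume about r^(N-1) \<rho>; this
  gains the factor (\<rho>/r)^(N-1) over the trivial bound.\<close>
lemma ball_energy_radial_le: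
  assumes [measurable]: "v \<in> borel_measurable borel" and rad: "radial v"
    and x: "(x::'a::euclidean_space) \<noteq> 0" and \<rho>: "\<rho> > 0"
  shows "ball_energy s v x \<rho> \<le> ennreal (2 ^ DIM('a) * (\<rho> / norm x) ^ (DIM('a) - 1)) * gagliardo_energy s v"
proof -
  let ?w = "unit_ball_vol DIM('a)" and ?N = "DIM('a)"
  define r where "r = norm x"
  have r_pos: "r > 0" using x by (simp add: r_def)
  define S where "S = ball (0::'a) (r + \<rho>) - ball 0 r"
  have shifted: "ball_energy s v x \<rho> \<le> ball_energy s v w (2 * \<rho>)" if "w \<in> S" for w
    using that x by (intro ball_energy_radial_le_shifted[OF _ rad]) (auto simp: S_def r_def)
  have "ball_energy s v x \<rho> * emeasure lborel S = (\<integral>\<^sup>+w. ball_energy s v x \<rho> * indicator S w \<partial>lborel)"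
    by (simp add: S_def nn_integral_cmult_indicator)
  also have "\<dots> \<le> (\<integral>\<^sup>+w. ball_energy s v w (2 * \<rho>) \<partial>lborel)"
    by (intro nn_integral_mono) (auto simp: indicator_def shifted)
  also have "\<dots> \<le> ennreal (?w * (2 * \<rho>) ^ ?N) * gagliardo_energy s v"
    using \<rho> by (intro nn_integral_ball_energy_le) auto
  finally have "ball_energy s v x \<rho> * ennreal (?w * r ^ (?N - 1) * \<rho>)
      \<le> ennreal (?w * (2 * \<rho>) ^ ?N) * gagliardo_energy s v"
    using emeasure_shell_ge[OF r_pos \<rho>, where 'a='a] unfolding S_def
    by (meson mult_left_mono order_trans zero_le)
  then have "ball_energy s v x \<rho> \<le> ennreal (?w * (2 * \<rho>) ^ ?N / (?w * r ^ (?N - 1) * \<rho>)) * gagliardo_energy s v"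
    using r_pos \<rho> by (intro ennreal_le_divide_of_mult_le) auto
  also have "?w * (2 * \<rho>) ^ ?N / (?w * r ^ (?N - 1) * \<rho>) = 2 ^ ?N * (\<rho> / r) ^ (?N - 1)"
  proof -
    have "\<rho> ^ ?N = \<rho> ^ (?N - 1) * \<rho>" using DIM_positive[where 'a='a] by (cases ?N) auto
    moreover have "?w \<noteq> 0" using unit_ball_vol_pos[of "real ?N"] by linarith
    ultimately show ?thesis using r_pos \<rho> by (simp add: power_mult_distrib power_divide)
  qed
  finally show ?thesis by (simp add: r_def)
qed

section \<open>Radial functions are bounded away from the origin\<close>

lemma nn_integral_sq_diff_half_ball_le:
  fixes v :: "'a::euclidean_space \<Rightarrow> real" and s :: real
  assumes [measurable]: "v \<in> borel_measurable borel" and rad: "radial v"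
    and R: "R > 0" "R \<le> norm x" and \<rho>: "\<rho> > 0" and s: "s \<ge> 0"
    and G: "gagliardo_energy s v \<le> ennreal \<Gamma>" and \<Gamma>: "\<Gamma> \<ge> 0"
  shows "(\<integral>\<^sup>+y. indicator (ball x \<rho>) y *
      (\<integral>\<^sup>+z. indicator (ball x (\<rho>/2)) z * ennreal ((v y - v z)\<^sup>2) \<partial>lborel) \<partial>lborel)
    \<le> ennreal ((2 * \<rho>) powr (real DIM('a) + 2 * s) * (2 ^ DIM('a) * (\<rho> / R) ^ (DIM('a) - 1)) * \<Gamma>)"
proof -
  let ?N = "DIM('a)" and ?a = "real DIM('a) + 2 * s"
  have x: "x \<noteq> 0" using R by auto
  have "(\<integral>\<^sup>+y. indicator (ball x \<rho>) y *
      (\<integral>\<^sup>+z. indicator (ball x (\<rho>/2)) z * ennreal ((v y - v z)\<^sup>2) \<partial>lborel) \<partial>lborel)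
    \<le> ennreal ((2 * \<rho>) powr ?a) *
      (\<integral>\<^sup>+y. \<integral>\<^sup>+z. indicator (ball x \<rho>) y * indicator (ball x (\<rho>/2)) z
        * ennreal (gagliardo_kernel s v y z) \<partial>lborel \<partial>lborel)"
  proof (intro nn_integral_sq_diff_le_kernel s)
    show "norm (y - z) \<le> 2 * \<rho>" if "y \<in> ball x \<rho>" "z \<in> ball x (\<rho>/2)" for y z
    proof -
      have "norm (y - x) < \<rho>" "norm (z - x) < \<rho> / 2"
        using that by (simp_all add: dist_norm norm_minus_commute)
      moreover have "norm (y - z) \<le> norm (y - x) + norm (z - x)"
        using norm_triangle_ineq4[of "y - x" "z - x"] by simp
      ultimately show ?thesis using norm_ge_zero[of "z - x"] by linarith
    qed
  qed auto
  also have "\<dots> \<le> ennreal ((2 * \<rho>) powr ?a) * ball_energy s v x \<rho>"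
    unfolding ball_energy_def using \<rho>
    by (intro mult_left_mono nn_integral_mono) (auto simp: indicator_def)
  also have "\<dots> \<le> ennreal ((2 * \<rho>) powr ?a) * (ennreal (2 ^ ?N * (\<rho> / R) ^ (?N - 1)) * ennreal \<Gamma>)"
  proof (intro mult_left_mono order_trans[OF ball_energy_radial_le[OF _ rad x \<rho>]] mult_mono)
    have "0 < norm x * R" using R x by (simp add: zero_less_mult_iff)
    then show "ennreal (2 ^ ?N * (\<rho> / norm x) ^ (?N - 1)) \<le> ennreal (2 ^ ?N * (\<rho> / R) ^ (?N - 1))"
      using R \<rho> by (intro ennreal_leI mult_left_mono power_mono divide_left_mono) auto
  qed (use G in auto)
  also have "\<dots> = ennreal ((2 * \<rho>) powr ?a * (2 ^ ?N * (\<rho> / R) ^ (?N - 1)) * \<Gamma>)"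
    using \<rho> R \<Gamma> by (simp add: ennreal_mult mult.assoc)
  finally show ?thesis .
qed

text \<open>With the AM-GM parameter e = \<rho>^(s-1/2) both terms of the bound are of order \<rho>^(s-1/2), which
  decays as \<rho> \<rightarrow> 0 exactly when s > 1/2.\<close>
lemma abs_average_half_ball_le:
  fixes v :: "'a::euclidean_space \<Rightarrow> real" and s :: real
  assumes [measurable]: "v \<in> borel_measurable borel" and rad: "radial v"
    and li: "\<And>c r. integrable lborel (\<lambda>y. indicator (ball c r) y * v y)"
    and R: "R > 0" "R \<le> norm x" and \<rho>: "\<rho> > 0" and s: "s \<ge> 0"
    and G: "gagliardo_energy s v \<le> ennreal \<Gamma>" and \<Gamma>: "\<Gamma> \<ge> 0"
  shows "\<bar>average (ball x \<rho>) v - average (ball x (\<rho>/2)) v\<bar>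
    \<le> (1 + 2 powr (3 * DIM('a) + 2 * s) * \<Gamma> / ((unit_ball_vol DIM('a))\<^sup>2 * R ^ (DIM('a) - 1))) / 2
       * \<rho> powr (s - 1/2)"
proof -
  let ?w = "unit_ball_vol DIM('a)" and ?N = "DIM('a)" and ?a = "real DIM('a) + 2 * s"
  define e where "e = \<rho> powr (s - 1/2)"
  define K where "K = 2 powr (3 * ?N + 2 * s) * \<Gamma> / (?w\<^sup>2 * R ^ (?N - 1))"
  define m where "m = ?w * (\<rho>/2) ^ ?N"
  define n where "n = ?w * \<rho> ^ ?N"
  define X where "X = (2 * \<rho>) powr ?a * (2 ^ ?N * (\<rho> / R) ^ (?N - 1)) * \<Gamma>"
  have e: "e > 0" and mn: "m > 0" "n > 0" and X: "X \<ge> 0"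
    using \<rho> R \<Gamma> by (auto simp: e_def m_def n_def X_def)
  have "ennreal \<bar>average (ball x \<rho>) v - average (ball x (\<rho>/2)) v\<bar> \<le> ennreal (e / 2) +
      ennreal (1 / (2 * e) / m / n) * (\<integral>\<^sup>+y. indicator (ball x \<rho>) y *
        (\<integral>\<^sup>+z. indicator (ball x (\<rho>/2)) z * ennreal ((v y - v z)\<^sup>2) \<partial>lborel) \<partial>lborel)"
    using \<rho> mn e by (intro abs_average_diff_le li) (auto simp: emeasure_ball m_def n_def)
  also have "\<dots> \<le> ennreal (e / 2) + ennreal (1 / (2 * e) / m / n) * ennreal X"
    unfolding X_def using nn_integral_sq_diff_half_ball_le[OF assms(1) rad R \<rho> s G \<Gamma>]
    by (intro add_left_mono mult_left_mono) auto
  also have "\<dots> = ennreal (e / 2 + 1 / (2 * e) / m / n * X)"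
    using e mn X by (intro ennreal_add_mult) auto
  also have "1 / (2 * e) / m / n * X = e / 2 * K"
  proof -
    have N: "\<rho> ^ ?N = \<rho> ^ (?N - 1) * \<rho>" using DIM_positive[where 'a='a] by (cases ?N) auto
    have "\<rho> powr ?a * \<rho> ^ (?N - 1) = (\<rho> powr (2 * s) / \<rho>) * (\<rho> ^ ?N * \<rho> ^ ?N)"
      using \<rho> by (simp add: powr_add powr_realpow N)
    also have "\<rho> powr (2 * s) / \<rho> = e * e"
      using \<rho> by (simp add: e_def powr_add[symmetric] powr_diff)
    finally have \<rho>_pow: "\<rho> powr ?a * \<rho> ^ (?N - 1) = e * e * (\<rho> ^ ?N * \<rho> ^ ?N)" .
    have two_pow: "2 ^ ?N * 2 powr ?a * 2 ^ ?N = 2 powr (3 * ?N + 2 * s)"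
      by (simp add: powr_realpow[symmetric] powr_add[symmetric])
    have "1 / (2 * e) / m / n * X = (2 ^ ?N * 2 powr ?a * 2 ^ ?N) * (\<rho> powr ?a * \<rho> ^ (?N - 1)) * \<Gamma>
        / (2 * e * ?w\<^sup>2 * R ^ (?N - 1) * (\<rho> ^ ?N * \<rho> ^ ?N))"
      using \<rho> by (simp add: X_def m_def n_def powr_mult power2_eq_square field_simps)
    also have "\<dots> = e / 2 * K"
      unfolding \<rho>_pow two_pow K_def using e \<rho> R by (simp add: power2_eq_square field_simps)
    finally show ?thesis .
  qed
  finally have "ennreal \<bar>average (ball x \<rho>) v - average (ball x (\<rho>/2)) v\<bar> \<le> ennreal (e / 2 + e / 2 * K)" .
  then have "\<bar>average (ball x \<rho>) v - average (ball x (\<rho>/2)) v\<bar> \<le> e / 2 + e / 2 * K"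
    using e \<Gamma> R by (subst (asm) ennreal_le_iff) (auto simp: K_def)
  then show ?thesis by (simp add: K_def e_def field_simps)
qed

lemma abs_average_diff_le_energy:
  fixes v :: "'a::euclidean_space \<Rightarrow> real" and s :: real
  assumes [measurable]: "v \<in> borel_measurable borel" "P \<in> sets borel" "Q \<in> sets borel"
    and mP: "emeasure lborel P = ennreal n" "n > 0" and mQ: "emeasure lborel Q = ennreal m" "m > 0"
    and vP: "integrable lborel (\<lambda>y. indicator P y * v y)"
    and vQ: "integrable lborel (\<lambda>y. indicator Q y * v y)"
    and D: "\<And>y z. y \<in> P \<Longrightarrow> z \<in> Q \<Longrightarrow> norm (y - z) \<le> D" and s: "s \<ge> 0"
    and G: "gagliardo_energy s v \<le> ennreal \<Gamma>" and \<Gamma>: "\<Gamma> \<ge> 0"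
  shows "\<bar>average P v - average Q v\<bar> \<le> 1/2 + D powr (real DIM('a) + 2 * s) * \<Gamma> / (2 * m * n)"
proof -
  let ?c = "D powr (real DIM('a) + 2 * s)"
  have "ennreal \<bar>average P v - average Q v\<bar> \<le> ennreal (1 / 2) + ennreal (1 / (2 * 1) / m / n) *
     (\<integral>\<^sup>+y. indicator P y * (\<integral>\<^sup>+z. indicator Q z * ennreal ((v y - v z)\<^sup>2) \<partial>lborel) \<partial>lborel)"
    using abs_average_diff_le[where e=1, OF assms(1,3) mQ vQ _ assms(2) mP vP] by simp
  also have "\<dots> \<le> ennreal (1 / 2) + ennreal (1 / (2 * 1) / m / n) * (ennreal ?c * ennreal \<Gamma>)"
    using nn_integral_sq_diff_le_kernel[OF assms(1-3) D s]
      nn_integral_indicator_kernel_le_energy[OF assms(1), of P Q s] G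
    by (intro add_left_mono mult_left_mono) (auto elim!: order_trans intro: mult_left_mono)
  also have "\<dots> = ennreal (1/2 + D powr (real DIM('a) + 2 * s) * \<Gamma> / (2 * m * n))"
    using mP mQ \<Gamma> by (simp add: ennreal_add_mult ennreal_mult[symmetric])
  finally show ?thesis
    using mP mQ \<Gamma> by (subst (asm) ennreal_le_iff) auto
qed

text \<open>The excess of |v| over a bound M for its averages on the balls B(x,\<rho>) is controlled at x
  by the energy of v in B(x,\<rho>) (AM-GM with parameter \<rho>^s), whose integral over x is O(\<rho>^(N+2s)).\<close>
lemma nn_integral_excess_le:
  fixes v :: "'a::euclidean_space \<Rightarrow> real" and s :: real
  assumes [measurable]: "v \<in> borel_measurable borel" "A \<in> sets borel"
    and li: "\<And>c r. integrable lborel (\<lambda>y. indicator (ball c r) y * v y)"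
    and s: "s \<ge> 0" and G: "gagliardo_energy s v \<le> ennreal \<Gamma>" and \<Gamma>: "\<Gamma> \<ge> 0"
    and A: "emeasure lborel A < \<infinity>" and \<rho>: "\<rho> > 0"
    and avg: "\<And>x. x \<in> A \<Longrightarrow> \<bar>average (ball x \<rho>) v\<bar> \<le> M"
  shows "(\<integral>\<^sup>+x. indicator A x * ennreal (max 0 (\<bar>v x\<bar> - M)) \<partial>lborel)
    \<le> ennreal ((measure lborel A / 2 + \<Gamma> / (2 * unit_ball_vol DIM('a))) * \<rho> powr s)"
proof -
  let ?w = "unit_ball_vol DIM('a)" and ?N = "DIM('a)"
  define \<alpha> where "\<alpha> = measure lborel A"
  have \<alpha>: "\<alpha> \<ge> 0" and A_eq: "emeasure lborel A = ennreal \<alpha>"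
    using A by (simp_all add: \<alpha>_def emeasure_eq_ennreal_measure)
  define e where "e = \<rho> powr s"
  define c where "c = 1 / (2 * e) / (?w * \<rho> ^ ?N)"
  have e: "e > 0" and c: "c \<ge> 0" using \<rho> by (simp_all add: e_def c_def)
  have "indicator A x * ennreal (max 0 (\<bar>v x\<bar> - M)) \<le> ennreal (e / 2) * indicator A x
      + ennreal c * (\<integral>\<^sup>+z. indicator (ball x \<rho>) z * ennreal ((v x - v z)\<^sup>2) \<partial>lborel)" for x
  proof (cases "x \<in> A")
    case True
    have "max 0 (\<bar>v x\<bar> - M) \<le> \<bar>v x - average (ball x \<rho>) v\<bar>"
      using avg[OF True] by linarith
    then have "ennreal (max 0 (\<bar>v x\<bar> - M)) \<le> ennreal \<bar>v x - average (ball x \<rho>) v\<bar>"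
      by (rule ennreal_leI)
    also have "\<dots> \<le> ennreal (e / 2) + ennreal c * (\<integral>\<^sup>+z. indicator (ball x \<rho>) z * ennreal ((v x - v z)\<^sup>2) \<partial>lborel)"
      unfolding c_def using \<rho> e li by (intro abs_diff_average_le) (auto simp: emeasure_ball)
    finally show ?thesis using True by simp
  qed simp
  then have "(\<integral>\<^sup>+x. indicator A x * ennreal (max 0 (\<bar>v x\<bar> - M)) \<partial>lborel)
      \<le> (\<integral>\<^sup>+x. ennreal (e / 2) * indicator A x
        + ennreal c * (\<integral>\<^sup>+z. indicator (ball x \<rho>) z * ennreal ((v x - v z)\<^sup>2) \<partial>lborel) \<partial>lborel)"
    by (intro nn_integral_mono)
  also have "\<dots> = ennreal (e / 2) * emeasure lborel A + ennreal c *
      (\<integral>\<^sup>+x. \<integral>\<^sup>+z. indicator (ball x \<rho>) z * ennreal ((v x - v z)\<^sup>2) \<partial>lborel \<partial>lborel)"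
    by (subst nn_integral_add) (auto simp: nn_integral_cmult_indicator nn_integral_cmult)
  also have "\<dots> \<le> ennreal (e / 2) * ennreal \<alpha> + ennreal c * ennreal (\<rho> powr (?N + 2 * s) * \<Gamma>)"
    unfolding A_eq using nn_integral_local_sq_diff_le[OF assms(1) s, of \<rho>] G \<Gamma>
    by (intro add_left_mono mult_left_mono) (auto simp: ennreal_mult elim!: order_trans intro: mult_left_mono)
  also have "\<dots> = ennreal (e / 2 * \<alpha> + c * (\<rho> powr (?N + 2 * s) * \<Gamma>))"
    using e \<alpha> c \<Gamma> by (intro ennreal_mult_add_mult) auto
  also have "\<rho> powr (?N + 2 * s) = \<rho> ^ ?N * e * e"
    using \<rho> by (simp add: e_def mult.assoc powr_realpow[symmetric] powr_add[symmetric] add.commute)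
  also have "e / 2 * \<alpha> + c * (\<rho> ^ ?N * e * e * \<Gamma>) = (\<alpha> / 2 + \<Gamma> / (2 * ?w)) * \<rho> powr s"
    using \<rho> e by (simp add: c_def e_def field_simps power2_eq_square)
  finally show ?thesis by (simp add: \<alpha>_def)
qed

text \<open>A substitute for Lebesgue's differentiation theorem.\<close>
lemma AE_abs_le_of_ball_averages_le:
  fixes v :: "'a::euclidean_space \<Rightarrow> real" and s :: real
  assumes [measurable]: "v \<in> borel_measurable borel" "A \<in> sets borel"
    and li: "\<And>c r. integrable lborel (\<lambda>y. indicator (ball c r) y * v y)"
    and s: "s > 0" and G: "gagliardo_energy s v \<le> ennreal \<Gamma>" and \<Gamma>: "\<Gamma> \<ge> 0"
    and A: "emeasure lborel A < \<infinity>"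
    and avg: "\<And>x j. x \<in> A \<Longrightarrow> \<bar>average (ball x (1 / 2 ^ j)) v\<bar> \<le> M"
  shows "AE x in lborel. x \<in> A \<longrightarrow> \<bar>v x\<bar> \<le> M"
proof -
  define f where "f x = indicator A x * ennreal (max 0 (\<bar>v x\<bar> - M))" for x
  have [measurable]: "f \<in> borel_measurable borel" unfolding f_def[abs_def] by measurable
  define C where "C = measure lborel A / 2 + \<Gamma> / (2 * unit_ball_vol DIM('a))"
  have "(\<integral>\<^sup>+x. f x \<partial>lborel) \<le> ennreal (C * ((1/2) powr s) ^ j)" for j :: nat
  proof -
    have "(1 / 2 ^ j :: real) powr s = ((1/2) powr s) ^ j"
      unfolding power_one_over[symmetric] by (rule power_powr_swap) simp
    then show ?thesis
      using nn_integral_excess_le[OF assms(1-3) _ G \<Gamma> A, of "1 / 2 ^ j" M] avg s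
      by (simp add: f_def C_def)
  qed
  moreover have "(\<lambda>j. ennreal (C * ((1/2) powr s) ^ j)) \<longlonglongrightarrow> ennreal (C * 0)"
    using s powr_less_mono2[of s "1/2" 1]
    by (intro tendsto_ennrealI tendsto_mult_left LIMSEQ_power_zero) auto
  ultimately have "(\<integral>\<^sup>+x. f x \<partial>lborel) \<le> ennreal (C * 0)"
    by (intro LIMSEQ_le_const) auto
  then have "AE x in lborel. f x = 0"
    using nn_integral_0_iff_AE[of f lborel] by simp
  then show ?thesis
    by eventually_elim (auto simp: f_def indicator_def ennreal_eq_0_iff)
qed

text \<open>Every small-ball average at a point of the annulus is linked to the average over a fixed
  reference ball B(p,\<delta>): first through the dyadic chain down from radius 1, whose steps decay
  geometrically because s > 1/2, then by one crude comparison between the unit ball and B(p,\<delta>).\<close>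
lemma radial_annulus_AE_bound:
  fixes s \<Gamma> R M \<delta> A :: real and p :: "'a::euclidean_space"
  assumes s: "1/2 < s" and \<Gamma>: "\<Gamma> \<ge> 0" and R: "R > 0" and \<delta>: "\<delta> > 0" and p: "norm p + \<delta> \<le> M"
  obtains B where "\<And>v. v \<in> borel_measurable borel \<Longrightarrow> radial v
      \<Longrightarrow> (\<And>c r. integrable lborel (\<lambda>y. indicator (ball c r) y * v y))
      \<Longrightarrow> gagliardo_energy s v \<le> ennreal \<Gamma> \<Longrightarrow> \<bar>average (ball p \<delta>) v\<bar> \<le> A
      \<Longrightarrow> AE x in lborel. x \<in> ball 0 M - ball 0 R \<longrightarrow> \<bar>v x\<bar> \<le> B"
proof -
  let ?w = "unit_ball_vol DIM('a)" and ?N = "DIM('a)" and ?a = "real DIM('a) + 2 * s"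
  define K where "K = (1 + 2 powr (3 * ?N + 2 * s) * \<Gamma> / (?w\<^sup>2 * R ^ (?N - 1))) / 2"
  define T where "T = K / (1 - 2 powr - (s - 1/2))"
  define U where "U = 1/2 + (2 * M + 1) powr ?a * \<Gamma> / (2 * (?w * \<delta> ^ ?N) * (?w * 1 ^ ?N))"
  have K: "K \<ge> 0" using \<Gamma> R by (simp add: K_def)
  show thesis
  proof (rule that[of "T + U + A"])
    fix v :: "'a \<Rightarrow> real"
    assume v [measurable]: "v \<in> borel_measurable borel" and rad: "radial v"
      and li: "\<And>c r. integrable lborel (\<lambda>y. indicator (ball c r) y * v y)"
      and G: "gagliardo_energy s v \<le> ennreal \<Gamma>" and avg_p: "\<bar>average (ball p \<delta>) v\<bar> \<le> A"
    show "AE x in lborel. x \<in> ball 0 M - ball 0 R \<longrightarrow> \<bar>v x\<bar> \<le> T + U + A"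
    proof (rule AE_abs_le_of_ball_averages_le[OF v _ li _ G \<Gamma>])
      fix x :: 'a and j :: nat assume x: "x \<in> ball 0 M - ball 0 R"
      have "\<bar>average (ball x (1 / 2 ^ j)) v - average (ball x 1) v\<bar> \<le> T"
        unfolding T_def
        using abs_dyadic_telescope_le[of "s - 1/2" K 1 "\<lambda>\<rho>. average (ball x \<rho>) v" j]
          abs_average_half_ball_le[OF v rad li R, of x] x s K \<Gamma> G
        by (auto simp: K_def)
      moreover have "\<bar>average (ball x 1) v - average (ball p \<delta>) v\<bar> \<le> U"
        unfolding U_def
      proof (rule abs_average_diff_le_energy[OF v _ _ _ _ _ _ li li _ _ G \<Gamma>])
        show "norm (y - z) \<le> 2 * M + 1" if "y \<in> ball x 1" "z \<in> ball p \<delta>" for y z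
          using that x p norm_triangle_ineq4[of y z] norm_triangle_ineq[of x "y - x"]
            norm_triangle_ineq[of p "z - p"]
          by (simp add: dist_norm norm_minus_commute)
      qed (use \<delta> s in \<open>auto simp: emeasure_ball\<close>)
      ultimately show "\<bar>average (ball x (1 / 2 ^ j)) v\<bar> \<le> T + U + A"
        using avg_p by linarith
    next
      have "emeasure lborel (ball (0::'a) M - ball 0 R) \<le> emeasure lborel (ball (0::'a) M)"
        by (intro emeasure_mono) auto
      then show "emeasure lborel (ball (0::'a) M - ball 0 R) < \<infinity>"
        using emeasure_lborel_ball_finite[of "0::'a" M] by simp
    qed (use s in auto)
  qed
qed

context
  fixes u :: "'a::euclidean_space \<Rightarrow> real" and s :: real and V :: "real \<Rightarrow> real"
  assumes u: "u \<in> HsV_rad s V"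
begin

lemma HsV_rad_measurable: "u \<in> borel_measurable borel"
  and HsV_rad_radial: "radial u"
  and HsV_rad_Lp_finite: "(\<integral>\<^sup>+ x. ennreal (\<bar>u x\<bar> powr crit_exp DIM('a) s) \<partial>lborel) < \<infinity>"
  and HsV_rad_gagliardo_finite: "gagliardo_sq s u < \<infinity>"
  and HsV_rad_potential_finite: "potential_int V u < \<infinity>"
  using u by (simp_all add: HsV_rad_def HsV_def Hdot_def)

lemma HsV_rad_integrable_ball:
  assumes "2 * s < DIM('a)" "0 \<le> s"
  shows "integrable lborel (\<lambda>y. indicator (ball c r) y * u y)"
proof -
  note [measurable] = HsV_rad_measurable
  show ?thesis
proof (rule integrableI_bounded)
  let ?p = "crit_exp DIM('a) s"
  have p: "1 \<le> ?p" using assms by (simp add: crit_exp_def field_simps)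
  have "ennreal (norm (indicator (ball c r) y * u y)) \<le> indicator (ball c r) y + ennreal (\<bar>u y\<bar> powr ?p)"
    for y
  proof (cases "y \<in> ball c r")
    case True
    have "ennreal \<bar>u y\<bar> \<le> ennreal (1 + \<bar>u y\<bar> powr ?p)"
      by (rule ennreal_leI) (rule abs_le_one_plus_powr[OF p])
    then show ?thesis using True by simp
  qed simp
  then have "(\<integral>\<^sup>+ y. ennreal (norm (indicator (ball c r) y * u y)) \<partial>lborel)
      \<le> (\<integral>\<^sup>+ y. indicator (ball c r) y + ennreal (\<bar>u y\<bar> powr ?p) \<partial>lborel)"
    by (intro nn_integral_mono)
  also have "\<dots> = emeasure lborel (ball c r) + (\<integral>\<^sup>+ y. ennreal (\<bar>u y\<bar> powr ?p) \<partial>lborel)"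
    by (subst nn_integral_add) auto
  also have "\<dots> < \<infinity>"
    using HsV_rad_Lp_finite emeasure_lborel_ball_finite[of c r] by simp
  finally show "(\<integral>\<^sup>+ y. ennreal (norm (indicator (ball c r) y * u y)) \<partial>lborel) < \<infinity>" .
qed simp
qed

end

lemma HsV_norm_nonneg: "HsV_norm s V u \<ge> 0"
  by (simp add: HsV_norm_def)

lemma gagliardo_sq_scale:
  assumes [measurable]: "u \<in> borel_measurable borel"
  shows "gagliardo_sq s (\<lambda>x. c * u x) = ennreal (c\<^sup>2) * gagliardo_sq s (u::'a::euclidean_space \<Rightarrow> real)"
proof -
  have "ennreal ((c * u y - c * u z)\<^sup>2 / norm (y - z) powr (real DIM('a) + 2 * s))
      = ennreal (c\<^sup>2) * ennreal ((u y - u z)\<^sup>2 / norm (y - z) powr (real DIM('a) + 2 * s))" for y z :: 'a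
    by (subst ennreal_mult'[symmetric]) (simp_all add: power_mult_distrib right_diff_distrib[symmetric])
  then show ?thesis
    unfolding gagliardo_sq_def by (simp add: nn_integral_cmult ac_simps)
qed

lemma potential_int_scale:
  assumes [measurable]: "u \<in> borel_measurable borel" and V: "continuous_on {0<..} V"
  shows "potential_int V (\<lambda>x. c * u x) = ennreal (c\<^sup>2) * potential_int V (u::'a::euclidean_space \<Rightarrow> real)"
proof -
  note [measurable] = measurable_radial_profile[OF V, where 'a='a]
  have "ennreal (V (norm x) * (c * u x)\<^sup>2) = ennreal (c\<^sup>2) * ennreal (V (norm x) * (u x)\<^sup>2)" for x :: 'a
    by (subst ennreal_mult'[symmetric]) (simp_all add: power_mult_distrib ac_simps)
  then show ?thesis
    unfolding potential_int_def by (simp add: nn_integral_cmult)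
qed

lemma nn_integral_abs_powr_scale:
  assumes [measurable]: "u \<in> borel_measurable borel"
  shows "(\<integral>\<^sup>+ x. ennreal (\<bar>c * u x\<bar> powr p) \<partial>lborel)
    = ennreal (\<bar>c\<bar> powr p) * (\<integral>\<^sup>+ x. ennreal (\<bar>u x\<bar> powr p) \<partial>(lborel::'a::euclidean_space measure))"
  by (simp add: abs_mult powr_mult ennreal_mult nn_integral_cmult)

lemma HsV_rad_scale:
  fixes u :: "'a::euclidean_space \<Rightarrow> real"
  assumes u: "u \<in> HsV_rad s V" and V: "continuous_on {0<..} V"
  shows "(\<lambda>x. c * u x) \<in> HsV_rad s V" and "HsV_norm s V (\<lambda>x. c * u x) = \<bar>c\<bar> * HsV_norm s V u"
proof -
  note [measurable] = HsV_rad_measurable[OF u]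
  have "radial (\<lambda>x. c * u x)" using HsV_rad_radial[OF u] unfolding radial_def by metis
  moreover have "(\<integral>\<^sup>+ x. ennreal (\<bar>c * u x\<bar> powr crit_exp DIM('a) s) \<partial>lborel) < \<infinity>"
    using HsV_rad_Lp_finite[OF u] by (simp add: nn_integral_abs_powr_scale ennreal_mult_less_top)
  moreover have "gagliardo_sq s (\<lambda>x. c * u x) < \<infinity>"
    using HsV_rad_gagliardo_finite[OF u] by (simp add: gagliardo_sq_scale ennreal_mult_less_top)
  moreover have "potential_int V (\<lambda>x. c * u x) < \<infinity>"
    using HsV_rad_potential_finite[OF u] by (simp add: potential_int_scale[OF _ V] ennreal_mult_less_top)
  ultimately show "(\<lambda>x. c * u x) \<in> HsV_rad s V"
    unfolding HsV_rad_def HsV_def Hdot_def by simp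
  have "HsV_norm s V (\<lambda>x. c * u x) = sqrt (c\<^sup>2 * (enn2real (gagliardo_sq s u) + enn2real (potential_int V u)))"
    unfolding HsV_norm_def gagliardo_sq_scale[OF HsV_rad_measurable[OF u]]
      potential_int_scale[OF HsV_rad_measurable[OF u] V]
    by (simp add: enn2real_mult distrib_left)
  also have "\<dots> = \<bar>c\<bar> * HsV_norm s V u"
    by (simp add: HsV_norm_def real_sqrt_mult)
  finally show "HsV_norm s V (\<lambda>x. c * u x) = \<bar>c\<bar> * HsV_norm s V u" .
qed

lemma HsV_norm_eq_0_imp_AE_zero:
  fixes u :: "'a::euclidean_space \<Rightarrow> real"
  assumes u: "u \<in> HsV_rad s V" and s: "0 < s" "s < 1" and n: "HsV_norm s V u = 0"
  shows "AE x in lborel. u x = 0"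
proof -
  have "enn2real (gagliardo_sq s u) + enn2real (potential_int V u) = 0"
    using n by (simp add: HsV_norm_def)
  then have "enn2real (gagliardo_sq s u) = 0" by (simp add: add_nonneg_eq_0_iff)
  then have "gagliardo_sq s u = 0"
    using HsV_rad_gagliardo_finite[OF u] by (auto simp: enn2real_eq_0_iff)
  then have "gagliardo_energy s u = 0"
    using CNs_pos[OF s, where 'a='a] by (simp add: gagliardo_sq_eq_energy[OF HsV_rad_measurable[OF u]])
  then show ?thesis
    by (rule AE_eq_0_of_gagliardo_energy_eq_0[OF HsV_rad_measurable[OF u] _ HsV_rad_Lp_finite[OF u]])
qed

lemma gagliardo_energy_le_of_HsV_norm_eq_1:
  fixes v :: "'a::euclidean_space \<Rightarrow> real"
  assumes v: "v \<in> HsV_rad s V" "HsV_norm s V v = 1" and s: "0 < s" "s < 1"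
  shows "gagliardo_energy s v \<le> ennreal (2 / CNs TYPE('a) s)"
proof -
  have c: "CNs TYPE('a) s / 2 > 0" using CNs_pos[OF s, where 'a='a] by simp
  have "enn2real (gagliardo_sq s v) + enn2real (potential_int V v) = 1"
    using v(2) by (simp add: HsV_norm_def)
  then have "enn2real (gagliardo_sq s v) \<le> 1"
    using enn2real_nonneg[of "potential_int V v"] by linarith
  moreover have "gagliardo_sq s v = ennreal (enn2real (gagliardo_sq s v))"
    using HsV_rad_gagliardo_finite[OF v(1)] by simp
  ultimately have "gagliardo_sq s v \<le> ennreal 1" by (metis ennreal_leI)
  then have "ennreal (CNs TYPE('a) s / 2) * gagliardo_energy s v \<le> ennreal (CNs TYPE('a) s / 2) * ennreal (2 / CNs TYPE('a) s)"
    using c by (simp add: gagliardo_sq_eq_energy[OF HsV_rad_measurable[OF v(1)]] ennreal_mult[symmetric])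
  then show ?thesis
    using c by (simp add: ennreal_mult_le_mult_iff)
qed

section \<open>Weighted integrals\<close>

lemma wint_mono_set: "A \<subseteq> B \<Longrightarrow> wint K q A u \<le> wint K q B u"
  unfolding wint_def by (intro nn_integral_mono) (auto simp: indicator_def)

lemma wint_Un_le:
  assumes [measurable]: "u \<in> borel_measurable borel" "A \<in> sets borel" "B \<in> sets borel"
    and K: "continuous_on {0<..} K"
  shows "wint K q (A \<union> B) u \<le> wint K q A u + wint K q B (u::'a::euclidean_space \<Rightarrow> real)"
proof -
  note [measurable] = measurable_radial_profile[OF K, where 'a='a]
  have "wint K q (A \<union> B) u \<le> (\<integral>\<^sup>+x. ennreal (K (norm x) * \<bar>u x\<bar> powr q) * indicator A x
      + ennreal (K (norm x) * \<bar>u x\<bar> powr q) * indicator B x \<partial>lborel)"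
    unfolding wint_def by (intro nn_integral_mono) (auto simp: indicator_def)
  also have "\<dots> = wint K q A u + wint K q B u"
    unfolding wint_def by (rule nn_integral_add) measurable
  finally show ?thesis .
qed

lemma wint_restrict: "wint K q UNIV (\<lambda>x. u x * indicator A x) = wint K q A u"
  unfolding wint_def by (intro nn_integral_cong) (auto simp: indicator_def)

lemma wint_scale:
  assumes [measurable]: "u \<in> borel_measurable borel" "A \<in> sets borel" and K: "continuous_on {0<..} K"
  shows "wint K q A (\<lambda>x. c * u x) = ennreal (\<bar>c\<bar> powr q) * wint K q A (u::'a::euclidean_space \<Rightarrow> real)"
proof -
  note [measurable] = measurable_radial_profile[OF K, where 'a='a]
  have "ennreal (K (norm x) * \<bar>c * u x\<bar> powr q) * indicator A x
      = ennreal (\<bar>c\<bar> powr q) * (ennreal (K (norm x) * \<bar>u x\<bar> powr q) * indicator A x)" for x :: 'a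
    by (subst mult.assoc[symmetric], subst ennreal_mult'[symmetric]) (simp_all add: abs_mult powr_mult ac_simps)
  then show ?thesis
    unfolding wint_def by (simp add: nn_integral_cmult)
qed

text \<open>Both sides are homogeneous of degree q, so the bound for normalised functions scales.\<close>
lemma wint_le_HsV_norm_powr:
  fixes u :: "'a::euclidean_space \<Rightarrow> real"
  assumes s: "0 < s" "s < 1" and V: "continuous_on {0<..} V" and K: "continuous_on {0<..} K"
    and A: "A \<in> sets borel" and C: "C \<ge> 0"
    and normalized: "\<And>v. v \<in> HsV_rad s V \<Longrightarrow> HsV_norm s V v = 1 \<Longrightarrow> wint K q A v \<le> ennreal C"
    and u: "u \<in> HsV_rad s V"
  shows "wint K q A u \<le> ennreal (C * HsV_norm s V u powr q)"
proof (cases "HsV_norm s V u = 0")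
  case True
  then have "AE x in lborel. u x = 0" using HsV_norm_eq_0_imp_AE_zero[OF u s] by simp
  then have "wint K q A u = (\<integral>\<^sup>+x. 0 \<partial>(lborel::'a measure))"
    unfolding wint_def by (intro nn_integral_cong_AE) (auto elim!: eventually_mono)
  then show ?thesis by simp
next
  case False
  define n where "n = HsV_norm s V u"
  have n: "n > 0" using False HsV_norm_nonneg[of s V u] by (simp add: n_def)
  define v where "v x = (1 / n) * u x" for x
  have v: "v \<in> HsV_rad s V" "HsV_norm s V v = 1"
    using HsV_rad_scale[OF u V, of "1 / n"] n by (simp_all add: v_def[abs_def] n_def)
  have "u = (\<lambda>x. n * v x)" using n by (simp add: v_def)
  then have "wint K q A u = ennreal (n powr q) * wint K q A v"
    using wint_scale[OF HsV_rad_measurable[OF v(1)] A K, where c=n and q=q] n by simp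
  also have "\<dots> \<le> ennreal (n powr q) * ennreal C" by (intro mult_left_mono normalized v) auto
  also have "\<dots> = ennreal (C * n powr q)" using C by (simp add: ennreal_mult[symmetric] mult.commute)
  finally show ?thesis by (simp add: n_def)
qed

lemma abs_average_le_wint:
  fixes v :: "'a::euclidean_space \<Rightarrow> real"
  assumes [measurable]: "v \<in> borel_measurable borel" "Q \<in> sets borel" "B \<in> sets borel"
    and QB: "Q \<subseteq> B" and K: "continuous_on {0<..} K"
    and mQ: "emeasure lborel Q = ennreal m" "m > 0"
    and vQ: "integrable lborel (\<lambda>y. indicator Q y * v y)"
    and q: "1 \<le> q" and k: "k > 0" "\<And>y. y \<in> Q \<Longrightarrow> k \<le> K (norm y)"
    and W: "wint K q B v \<le> ennreal W" "W \<ge> 0"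
  shows "\<bar>average Q v\<bar> \<le> 1 + W / (k * m)"
proof -
  have measQ: "measure lborel Q = m" using mQ by (simp add: measure_def)
  have "ennreal \<bar>(\<integral>y. indicator Q y * v y \<partial>lborel) / m\<bar>
      \<le> ennreal 1 + ennreal (1 / m) * (\<integral>\<^sup>+y. indicator Q y * ennreal (\<bar>v y\<bar> powr q) \<partial>lborel)"
  proof (intro abs_integral_divide_le vQ)
    show "ennreal \<bar>v y\<bar> \<le> ennreal 1 + ennreal 1 * ennreal (\<bar>v y\<bar> powr q)" for y
    proof -
      have "ennreal \<bar>v y\<bar> \<le> ennreal (1 + \<bar>v y\<bar> powr q)"
        by (rule ennreal_leI) (rule abs_le_one_plus_powr[OF q])
      then show ?thesis by simp
    qed
  qed (use mQ in auto)
  also have "(\<integral>\<^sup>+y. indicator Q y * ennreal (\<bar>v y\<bar> powr q) \<partial>lborel)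
      \<le> (\<integral>\<^sup>+y. ennreal (1 / k) * (ennreal (K (norm y) * \<bar>v y\<bar> powr q) * indicator B y) \<partial>lborel)"
  proof (intro nn_integral_mono)
    fix y
    show "indicator Q y * ennreal (\<bar>v y\<bar> powr q)
        \<le> ennreal (1 / k) * (ennreal (K (norm y) * \<bar>v y\<bar> powr q) * indicator B y)"
    proof (cases "y \<in> Q")
      case True
      have "\<bar>v y\<bar> powr q \<le> 1 / k * (K (norm y) * \<bar>v y\<bar> powr q)"
        using k(1) k(2)[OF True] by (simp add: field_simps mult_right_mono)
      then have "ennreal (\<bar>v y\<bar> powr q) \<le> ennreal (1 / k) * ennreal (K (norm y) * \<bar>v y\<bar> powr q)"
        using k(1) by (simp add: ennreal_mult'[symmetric] ennreal_leI)
      then show ?thesis using True QB by auto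
    qed simp
  qed
  also have "\<dots> \<le> ennreal (1 / k) * ennreal W"
    using W(1) measurable_radial_profile[OF K, where 'a='a] unfolding wint_def
    by (subst nn_integral_cmult) (auto intro: mult_left_mono)
  finally have "ennreal \<bar>average Q v\<bar> \<le> ennreal (1 + 1 / m * (1 / k * W))"
    using mQ k W by (simp add: average_def measQ ennreal_mult[symmetric] ennreal_plus[symmetric]
        mult_left_mono ennreal_leI)
  then show ?thesis using mQ k W by (simp add: field_simps)
qed

lemma wint_le_of_AE_abs_le:
  fixes v :: "'a::euclidean_space \<Rightarrow> real"
  assumes "A \<in> sets borel" and bound: "AE x in lborel. x \<in> A \<longrightarrow> \<bar>v x\<bar> \<le> b"
    and K: "\<And>x. x \<in> A \<Longrightarrow> 0 \<le> K (norm x) \<and> K (norm x) \<le> k" and q: "q \<ge> 0"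
  shows "wint K q A v \<le> ennreal (k * b powr q) * emeasure lborel A"
proof -
  have "wint K q A v \<le> (\<integral>\<^sup>+x. ennreal (k * b powr q) * indicator A x \<partial>lborel)"
    unfolding wint_def
  proof (intro nn_integral_mono_AE, use bound in eventually_elim)
    case (elim x)
    show ?case
    proof (cases "x \<in> A")
      case True
      then have "\<bar>v x\<bar> powr q \<le> b powr q" using elim q by (intro powr_mono2) auto
      then have "K (norm x) * \<bar>v x\<bar> powr q \<le> k * b powr q" using K[OF True] by (intro mult_mono) auto
      then show ?thesis using True by (simp add: ennreal_leI)
    qed simp
  qed
  also have "\<dots> = ennreal (k * b powr q) * emeasure lborel A"
    using assms(1) by (simp add: nn_integral_cmult_indicator)
  finally show ?thesis .
qed

lemma wint_le_S0:
  "v \<in> HsV_rad s V \<Longrightarrow> HsV_norm s V v = 1 \<Longrightarrow> wint K q (ball 0 R) v \<le> S0 s V K TYPE('a) q R"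
  for v :: "'a::euclidean_space \<Rightarrow> real"
  unfolding S0_def by (intro SUP_upper) auto

lemma wint_le_Sinf:
  "v \<in> HsV_rad s V \<Longrightarrow> HsV_norm s V v = 1 \<Longrightarrow> wint K q (- ball 0 R) v \<le> Sinf s V K TYPE('a) q R"
  for v :: "'a::euclidean_space \<Rightarrow> real"
  unfolding Sinf_def by (intro SUP_upper) auto

lemma ex_ball_with_profile_lower_bound:
  fixes K :: "real \<Rightarrow> real"
  assumes K: "continuous_on {0<..} K" "\<forall>r>0. K r > 0" and R: "R > 0"
  obtains p :: "'a::euclidean_space" and \<delta> k where "\<delta> > 0" "norm p + \<delta> \<le> R" "ball p \<delta> \<subseteq> ball 0 R"
    "k > 0" "\<And>y. y \<in> ball p \<delta> \<Longrightarrow> k \<le> K (norm y)"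
proof -
  obtain p :: 'a where p: "norm p = R / 2" using vector_choose_size[of "R / 2"] R by auto
  have ball_p: "R / 4 \<le> norm y \<and> norm y \<le> 3 * R / 4" if "y \<in> ball p (R / 4)" for y
    using that p norm_triangle_ineq2[of y p] norm_triangle_ineq3[of y p]
    by (auto simp: dist_norm norm_minus_commute)
  have "continuous_on {R/4..3*R/4} K" using R by (intro continuous_on_subset[OF K(1)]) auto
  then have "\<exists>t\<in>{R/4..3*R/4}. \<forall>t'\<in>{R/4..3*R/4}. K t \<le> K t'"
    using R by (intro continuous_attains_inf) auto
  then obtain t where t: "t \<in> {R/4..3*R/4}" "\<And>t'. t' \<in> {R/4..3*R/4} \<Longrightarrow> K t \<le> K t'"
    by blast
  show thesis
  proof (rule that[of "R / 4" p "K t"])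
    show "ball p (R / 4) \<subseteq> ball 0 R" using ball_p R by fastforce
    show "K t \<le> K (norm y)" if "y \<in> ball p (R / 4)" for y using ball_p[OF that] t(2) by auto
  qed (use R p t(1) K(2) in auto)
qed

text \<open>The finiteness of S_0 bounds the average of every normalised v over a ball inside B_R where
  K is bounded below; this is the reference ball of the annulus estimate.\<close>
lemma normalized_annulus_AE_bound:
  fixes K V :: "real \<Rightarrow> real" and s q R M :: real
  assumes s: "1/2 < s" "s < 1" and N: "2 * s < DIM('a::euclidean_space)"
    and q: "1 \<le> q" and K: "continuous_on {0<..} K" "\<forall>r>0. K r > 0"
    and R: "0 < R" "R \<le> M" and S0: "S0 s V K TYPE('a) q R < \<infinity>"
  obtains B where "\<And>v::'a \<Rightarrow> real. v \<in> HsV_rad s V \<Longrightarrow> HsV_norm s V v = 1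
    \<Longrightarrow> AE x in lborel. x \<in> ball 0 M - ball 0 R \<longrightarrow> \<bar>v x\<bar> \<le> B"
proof -
  define \<Gamma> where "\<Gamma> = 2 / CNs TYPE('a) s"
  have \<Gamma>: "\<Gamma> \<ge> 0" using CNs_pos[of s, where 'a='a] s by (simp add: \<Gamma>_def)
  define S where "S = enn2real (S0 s V K TYPE('a) q R)"
  have S: "S \<ge> 0" "S0 s V K TYPE('a) q R = ennreal S" using S0 by (simp_all add: S_def)
  obtain p :: 'a and \<delta> k where \<delta>: "\<delta> > 0" "norm p + \<delta> \<le> R" and p: "ball p \<delta> \<subseteq> ball 0 R"
    and k: "k > 0" "\<And>y. y \<in> ball p \<delta> \<Longrightarrow> k \<le> K (norm y)"
    using ex_ball_with_profile_lower_bound[OF K R(1)] by metis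
  define A where "A = 1 + S / (k * (unit_ball_vol DIM('a) * \<delta> ^ DIM('a)))"
  obtain B where B: "\<And>v. v \<in> borel_measurable borel \<Longrightarrow> radial v
      \<Longrightarrow> (\<And>c r. integrable lborel (\<lambda>y. indicator (ball c r) y * v y))
      \<Longrightarrow> gagliardo_energy s v \<le> ennreal \<Gamma> \<Longrightarrow> \<bar>average (ball p \<delta>) v\<bar> \<le> A
      \<Longrightarrow> AE x in lborel. x \<in> ball 0 M - ball 0 R \<longrightarrow> \<bar>v x\<bar> \<le> B"
  proof -
    have "norm p + \<delta> \<le> M" using \<delta>(2) R(2) by linarith
    then show thesis using that radial_annulus_AE_bound[OF s(1) \<Gamma> R(1) \<delta>(1)] by blast
  qed
  show thesis
  proof (rule that[of B], rule B)
    fix v :: "'a \<Rightarrow> real" assume v: "v \<in> HsV_rad s V" "HsV_norm s V v = 1"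
    show "v \<in> borel_measurable borel" "radial v"
      by (rule HsV_rad_measurable[OF v(1)], rule HsV_rad_radial[OF v(1)])
    show li: "integrable lborel (\<lambda>y. indicator (ball c r) y * v y)" for c r
      using HsV_rad_integrable_ball[OF v(1) N] s by simp
    show "gagliardo_energy s v \<le> ennreal \<Gamma>"
      unfolding \<Gamma>_def using s by (intro gagliardo_energy_le_of_HsV_norm_eq_1[OF v]) auto
    show "\<bar>average (ball p \<delta>) v\<bar> \<le> A"
      unfolding A_def using \<delta> k S wint_le_S0[OF v, of K q R]
      by (intro abs_average_le_wint[OF HsV_rad_measurable[OF v(1)] _ _ p K(1) _ _ li q _ k(2)])
         (auto simp: emeasure_ball)
  qed
qed

lemma normalized_wint_ball_bound:
  fixes K V :: "real \<Rightarrow> real" and s q R M :: real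
  assumes s: "1/2 < s" "s < 1" and N: "2 * s < DIM('a::euclidean_space)"
    and q: "1 \<le> q" and K: "continuous_on {0<..} K" "\<forall>r>0. K r > 0"
    and R: "0 < R" "R \<le> M" and S0: "S0 s V K TYPE('a) q R < \<infinity>"
  obtains C where "C \<ge> 0" "\<And>v::'a \<Rightarrow> real. v \<in> HsV_rad s V \<Longrightarrow> HsV_norm s V v = 1
    \<Longrightarrow> wint K q (ball 0 M) v \<le> ennreal C"
proof -
  let ?w = "unit_ball_vol DIM('a)" and ?N = "DIM('a)" and ?A = "ball (0::'a) M - ball 0 R"
  obtain B where B: "\<And>v::'a \<Rightarrow> real. v \<in> HsV_rad s V \<Longrightarrow> HsV_norm s V v = 1
      \<Longrightarrow> AE x in lborel. x \<in> ?A \<longrightarrow> \<bar>v x\<bar> \<le> B"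
    using normalized_annulus_AE_bound[OF s N q K R S0] by blast
  have "continuous_on {R..M} K" using R by (intro continuous_on_subset[OF K(1)]) auto
  then have "\<exists>t\<in>{R..M}. \<forall>t'\<in>{R..M}. K t' \<le> K t"
    using R by (intro continuous_attains_sup) auto
  then obtain t where t: "t \<in> {R..M}" "\<And>t'. t' \<in> {R..M} \<Longrightarrow> K t' \<le> K t"
    by blast
  have Kt: "K t > 0" using t(1) K(2) R by auto
  define S where "S = enn2real (S0 s V K TYPE('a) q R)"
  have S: "S \<ge> 0" "S0 s V K TYPE('a) q R = ennreal S" using S0 by (simp_all add: S_def)
  define C where "C = S + K t * B powr q * (?w * M ^ ?N)"
  show thesis
  proof (rule that[of C])
    show "C \<ge> 0" using S Kt R by (simp add: C_def)
    fix v :: "'a \<Rightarrow> real" assume v: "v \<in> HsV_rad s V" "HsV_norm s V v = 1"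
    have "wint K q (ball 0 M) v \<le> wint K q (ball 0 R \<union> ?A) v"
      by (intro wint_mono_set) auto
    also have "\<dots> \<le> wint K q (ball 0 R) v + wint K q ?A v"
      by (intro wint_Un_le HsV_rad_measurable[OF v(1)] K(1)) auto
    also have "wint K q (ball 0 R) v \<le> ennreal S"
      using wint_le_S0[OF v, of K q R] S(2) by simp
    also have "wint K q ?A v \<le> ennreal (K t * B powr q) * emeasure lborel ?A"
    proof (intro wint_le_of_AE_abs_le B[OF v])
      fix x assume "x \<in> ?A"
      then have "norm x \<in> {R..M}" "norm x > 0" using R by auto
      then show "0 \<le> K (norm x) \<and> K (norm x) \<le> K t" using t(2) K(2) by (auto simp: less_imp_le)
    qed (use q in auto)
    also have "emeasure lborel ?A \<le> ennreal (?w * M ^ ?N)"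
      using emeasure_mono[of ?A "ball 0 M" lborel] R by (simp add: emeasure_ball)
    also have "ennreal S + ennreal (K t * B powr q) * ennreal (?w * M ^ ?N) = ennreal C"
      unfolding C_def using S Kt R by (intro ennreal_add_mult) auto
    finally show "wint K q (ball 0 M) v \<le> ennreal C"
      by (simp add: mult_left_mono add_left_mono)
  qed
qed

lemma normalized_wint_outside_ball_bound:
  assumes "R \<le> M" and "Sinf s V K TYPE('a::euclidean_space) q R < \<infinity>"
  obtains C where "C \<ge> 0" "\<And>v::'a \<Rightarrow> real. v \<in> HsV_rad s V \<Longrightarrow> HsV_norm s V v = 1
    \<Longrightarrow> wint K q (- ball 0 M) v \<le> ennreal C"
proof (rule that)
  fix v :: "'a \<Rightarrow> real" assume v: "v \<in> HsV_rad s V" "HsV_norm s V v = 1"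
  have "wint K q (- ball 0 M) v \<le> wint K q (- ball 0 R) v"
    using assms(1) by (intro wint_mono_set) auto
  also have "\<dots> \<le> Sinf s V K TYPE('a) q R" by (rule wint_le_Sinf[OF v])
  finally show "wint K q (- ball 0 M) v \<le> ennreal (enn2real (Sinf s V K TYPE('a) q R))"
    using assms(2) by simp
qed simp

lemma LqK_norm_le:
  assumes "wint K q UNIV w \<le> ennreal (c * n powr q)" and "c \<ge> 0" "n \<ge> 0" "q > 0"
  shows "LqK_norm K q w \<le> c powr (1/q) * n"
proof -
  have "enn2real (wint K q UNIV w) \<le> c * n powr q"
    using assms enn2real_mono[OF assms(1)] by simp
  then have "LqK_norm K q w \<le> (c * n powr q) powr (1/q)"
    unfolding LqK_norm_def using assms by (intro powr_mono2) auto
  also have "\<dots> = c powr (1/q) * n"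
    using assms by (simp add: powr_mult powr_powr)
  finally show ?thesis .
qed

text \<open>The decomposition u = u \<chi>_B + u \<chi>_(-B) witnesses the embedding.\<close>
lemma cont_embedded_of_wint_le:
  fixes B :: "'a::euclidean_space set"
  assumes B: "B \<in> sets borel" and q: "q1 > 0" "q2 > 0" and C: "C1 \<ge> 0" "C2 \<ge> 0"
    and in_B: "\<And>u. u \<in> HsV_rad s V \<Longrightarrow> wint K q1 B u \<le> ennreal (C1 * HsV_norm s V u powr q1)"
    and out_B: "\<And>u. u \<in> HsV_rad s V \<Longrightarrow> wint K q2 (- B) u \<le> ennreal (C2 * HsV_norm s V u powr q2)"
  shows "cont_embedded s V K TYPE('a) q1 q2"
proof -
  have parts: "(\<lambda>x. u x * indicator B x) \<in> LqK K q1 \<and> (\<lambda>x. u x * indicator (- B) x) \<in> LqK K q2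
      \<and> LqK_norm K q1 (\<lambda>x. u x * indicator B x) \<le> C1 powr (1/q1) * HsV_norm s V u
      \<and> LqK_norm K q2 (\<lambda>x. u x * indicator (- B) x) \<le> C2 powr (1/q2) * HsV_norm s V u"
    if u: "u \<in> HsV_rad s V" for u
  proof -
    note [measurable] = HsV_rad_measurable[OF u] B
    have W1: "wint K q1 UNIV (\<lambda>x. u x * indicator B x) \<le> ennreal (C1 * HsV_norm s V u powr q1)"
      and W2: "wint K q2 UNIV (\<lambda>x. u x * indicator (- B) x) \<le> ennreal (C2 * HsV_norm s V u powr q2)"
      unfolding wint_restrict using in_B[OF u] out_B[OF u] .
    then show ?thesis
      using C q HsV_norm_nonneg[of s V u] by (auto simp: LqK_def intro: le_less_trans LqK_norm_le)
  qed
  have split: "u = (\<lambda>x. u x * indicator B x + u x * indicator (- B) x)" for u :: "'a \<Rightarrow> real"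
    by (auto simp: indicator_def)
  show ?thesis unfolding cont_embedded_def
  proof (intro conjI subsetI exI ballI)
    fix u :: "'a \<Rightarrow> real" assume u: "u \<in> HsV_rad s V"
    then show "u \<in> LsumK K q1 q2"
      unfolding LsumK_def using parts[OF u] split[of u] by blast
    have "LsumK_norm K q1 q2 u \<le> max (LqK_norm K q1 (\<lambda>x. u x * indicator B x))
        (LqK_norm K q2 (\<lambda>x. u x * indicator (- B) x))"
      unfolding LsumK_norm_def using parts[OF u] split[of u]
      by (intro cInf_lower) (auto simp: LqK_norm_def intro!: bdd_belowI[of _ 0] max.coboundedI1)
    also have "\<dots> \<le> (C1 powr (1/q1) + C2 powr (1/q2)) * HsV_norm s V u"
      using parts[OF u] HsV_norm_nonneg[of s V u] by (auto simp: distrib_right intro: add_increasing2 add_increasing)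
    finally show "LsumK_norm K q1 q2 u \<le> (C1 powr (1/q1) + C2 powr (1/q2)) * HsV_norm s V u" .
  qed
qed

theorem theorem3p2:
  fixes V K :: "real \<Rightarrow> real" and s q1 q2 R1 R2 :: real
  assumes "DIM('a::euclidean_space) \<ge> 2"
    and "1/2 < s" and "s < 1"
    and "q1 > 1" and "q2 > 1"
    and "continuous_on {0<..} V" and "\<forall>r>0. V r \<ge> 0"
    and "continuous_on {0<..} K" and "\<forall>r>0. K r > 0"
    and "R1 > 0" and "R2 > 0"
    and "S0 s V K TYPE('a) q1 R1 < \<infinity>"
    and "Sinf s V K TYPE('a) q2 R2 < \<infinity>"
  shows "cont_embedded s V K TYPE('a) q1 q2"
proof -
  note s = assms(2,3) and V = assms(6) and K = assms(8,9)
  define M where "M = max R1 R2"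
  have N: "2 * s < DIM('a)" using assms(1,3) by linarith
  obtain C1 where C1: "C1 \<ge> 0" "\<And>v::'a \<Rightarrow> real. v \<in> HsV_rad s V \<Longrightarrow> HsV_norm s V v = 1
      \<Longrightarrow> wint K q1 (ball 0 M) v \<le> ennreal C1"
    using normalized_wint_ball_bound[OF s N _ K _ _ assms(12), of M] assms(4,10) by (auto simp: M_def)
  obtain C2 where C2: "C2 \<ge> 0" "\<And>v::'a \<Rightarrow> real. v \<in> HsV_rad s V \<Longrightarrow> HsV_norm s V v = 1
      \<Longrightarrow> wint K q2 (- ball 0 M) v \<le> ennreal C2"
    using normalized_wint_outside_ball_bound[OF _ assms(13), of M] by (auto simp: M_def)
  show ?thesis
  proof (rule cont_embedded_of_wint_le[of "ball 0 M"])
    fix u :: "'a \<Rightarrow> real" assume u: "u \<in> HsV_rad s V"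
    show "wint K q1 (ball 0 M) u \<le> ennreal (C1 * HsV_norm s V u powr q1)"
      using s by (intro wint_le_HsV_norm_powr[OF _ _ V K(1) _ C1 u]) auto
    show "wint K q2 (- ball 0 M) u \<le> ennreal (C2 * HsV_norm s V u powr q2)"
      using s by (intro wint_le_HsV_norm_powr[OF _ _ V K(1) _ C2 u]) auto
  qed (use assms(4,5) C1 C2 in auto)
qed

end
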